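(* Let $\Gamma$ be a finite graph and $\mathcal{G}$ a collection of non-trivial groups indexed by the vertices of $\Gamma$. Decompose $\Gamma$ as a join $$\Gamma=\{u_1\}\ast\cdots\ast\{u_r\}\ast\{a_1,b_1\}\ast\cdots\ast\{a_s,b_s\}\ast\Lambda_1\ast\cdots\ast\Lambda_n$$ where $u_1,\ldots,u_r$ are single vertices, each $a_i,b_i$ are two non-adjacent vertices whose vertex-groups are $\mathbb{Z}_2$, and each $\Lambda_i$ is an irreducible subgraph containing at least two vertices whose vertex-groups are not all $\mathbb{Z}_2$... more precisely, containing at least two vertices not both labelled by $\mathbb{Z}_2$. Then $$\mathrm{VZ}(\Gamma\mathcal{G})=\mathrm{VZ}(\langle u_1\rangle)\times\cdots\times\mathrm{VZ}(\langle u_r\rangle)\times\langle a_1b_1\rangle\times\cdots\times\langle a_sb_s\rangle.$$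
   Context: The graph product is $\Gamma\mathcal{G}=\langle G_u\ (u\in V(\Gamma))\mid [G_u,G_v]=1 \text{ whenever } u,v \text{ adjacent}\rangle$; $\langle u\rangle$ denotes the vertex-group $G_u$ (a vertex is "labelled by" its vertex-group). The join $\Phi\ast\Psi$ of graphs is obtained from $\Phi\sqcup\Psi$ by joining every vertex of $\Phi$ to every vertex of $\Psi$; a graph is irreducible if it does not decompose as a join of two non-empty graphs. The virtual centre $\mathrm{VZ}(G)$ of a group $G$ is the set of elements of $G$ that centralise some finite-index subgroup of $G$. *)

theory Defs
  imports "HOL-Algebra.Algebra"
begin

definition fin_graph :: "'v set \<Rightarrow> ('v \<Rightarrow> 'v \<Rightarrow> bool) \<Rightarrow> bool" where
  "fin_graph V E \<longleftrightarrow> finite V \<and> (\<forall>u v. E u v \<longrightarrow> u \<in> V \<and> v \<in> V)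
     \<and> (\<forall>u v. E u v \<longrightarrow> E v u) \<and> (\<forall>u. \<not> E u u)"

definition irreducible_sub :: "('v \<Rightarrow> 'v \<Rightarrow> bool) \<Rightarrow> 'v set \<Rightarrow> bool" where
  "irreducible_sub E L \<longleftrightarrow> L \<noteq> {} \<and>
     \<not> (\<exists>A B. A \<noteq> {} \<and> B \<noteq> {} \<and> A \<union> B = L \<and> A \<inter> B = {} \<and> (\<forall>a\<in>A. \<forall>b\<in>B. E a b))"

text \<open>Words over the vertex groups and the defining relations of the graph product
  (free product of the vertex groups modulo commutation of adjacent vertex groups).\<close>
definition gp_words :: "'v set \<Rightarrow> ('v \<Rightarrow> 'g monoid) \<Rightarrow> ('v \<times> 'g) list set" where
  "gp_words V G = {w. \<forall>(v, g) \<in> set w. v \<in> V \<and> g \<in> carrier (G v)}"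

inductive gp_eq :: "'v set \<Rightarrow> ('v \<Rightarrow> 'v \<Rightarrow> bool) \<Rightarrow> ('v \<Rightarrow> 'g monoid)
    \<Rightarrow> ('v \<times> 'g) list \<Rightarrow> ('v \<times> 'g) list \<Rightarrow> bool"
  for V E G where
  gp_refl: "w \<in> gp_words V G \<Longrightarrow> gp_eq V E G w w"
| gp_sym: "gp_eq V E G w w' \<Longrightarrow> gp_eq V E G w' w"
| gp_trans: "gp_eq V E G w w' \<Longrightarrow> gp_eq V E G w' w'' \<Longrightarrow> gp_eq V E G w w''"
| gp_unit: "xs \<in> gp_words V G \<Longrightarrow> ys \<in> gp_words V G \<Longrightarrow> v \<in> V \<Longrightarrow>
    gp_eq V E G (xs @ [(v, \<one>\<^bsub>G v\<^esub>)] @ ys) (xs @ ys)"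
| gp_merge: "xs \<in> gp_words V G \<Longrightarrow> ys \<in> gp_words V G \<Longrightarrow> v \<in> V \<Longrightarrow>
    g \<in> carrier (G v) \<Longrightarrow> h \<in> carrier (G v) \<Longrightarrow>
    gp_eq V E G (xs @ [(v, g), (v, h)] @ ys) (xs @ [(v, g \<otimes>\<^bsub>G v\<^esub> h)] @ ys)"
| gp_comm: "xs \<in> gp_words V G \<Longrightarrow> ys \<in> gp_words V G \<Longrightarrow> E u v \<Longrightarrow> u \<in> V \<Longrightarrow> v \<in> V \<Longrightarrow>
    g \<in> carrier (G u) \<Longrightarrow> h \<in> carrier (G v) \<Longrightarrow>
    gp_eq V E G (xs @ [(u, g), (v, h)] @ ys) (xs @ [(v, h), (u, g)] @ ys)"

definition gp_class :: "'v set \<Rightarrow> ('v \<Rightarrow> 'v \<Rightarrow> bool) \<Rightarrow> ('v \<Rightarrow> 'g monoid)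
    \<Rightarrow> ('v \<times> 'g) list \<Rightarrow> ('v \<times> 'g) list set" where
  "gp_class V E G w = {w'. gp_eq V E G w w'}"

definition gp_mult :: "'v set \<Rightarrow> ('v \<Rightarrow> 'v \<Rightarrow> bool) \<Rightarrow> ('v \<Rightarrow> 'g monoid)
    \<Rightarrow> ('v \<times> 'g) list set \<Rightarrow> ('v \<times> 'g) list set \<Rightarrow> ('v \<times> 'g) list set" where
  "gp_mult V E G W1 W2 = {z. \<exists>p\<in>W1. \<exists>q\<in>W2. gp_eq V E G (p @ q) z}"

definition graph_product :: "'v set \<Rightarrow> ('v \<Rightarrow> 'v \<Rightarrow> bool) \<Rightarrow> ('v \<Rightarrow> 'g monoid)
    \<Rightarrow> ('v \<times> 'g) list set monoid" where
  "graph_product V E G =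
    \<lparr> carrier = gp_class V E G ` gp_words V G,
      monoid.mult = gp_mult V E G,
      one = gp_class V E G [] \<rparr>"

definition gp_incl :: "'v set \<Rightarrow> ('v \<Rightarrow> 'v \<Rightarrow> bool) \<Rightarrow> ('v \<Rightarrow> 'g monoid)
    \<Rightarrow> 'v \<Rightarrow> 'g \<Rightarrow> ('v \<times> 'g) list set" where
  "gp_incl V E G v g = gp_class V E G [(v, g)]"

definition virtual_centre :: "('a, 'b) monoid_scheme \<Rightarrow> 'a set" where
  "virtual_centre H = {x \<in> carrier H. \<exists>K. subgroup K H \<and> finite (rcosets\<^bsub>H\<^esub> K)
      \<and> (\<forall>k\<in>K. x \<otimes>\<^bsub>H\<^esub> k = k \<otimes>\<^bsub>H\<^esub> x)}"

definition is_Z2 :: "'g monoid \<Rightarrow> bool" where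
  "is_Z2 H \<longleftrightarrow> H \<cong> integer_mod_group 2"

definition join_decomposition :: "'v set \<Rightarrow> ('v \<Rightarrow> 'v \<Rightarrow> bool) \<Rightarrow> ('v \<Rightarrow> 'g monoid)
    \<Rightarrow> 'v set set \<Rightarrow> bool" where
  "join_decomposition V E G P \<longleftrightarrow>
     \<Union>P = V \<and> {} \<notin> P \<and>
     (\<forall>B\<in>P. \<forall>C\<in>P. B \<noteq> C \<longrightarrow> B \<inter> C = {} \<and> (\<forall>x\<in>B. \<forall>y\<in>C. E x y)) \<and>
     (\<forall>B\<in>P. card B = 1
        \<or> (\<exists>a b. B = {a, b} \<and> a \<noteq> b \<and> \<not> E a b \<and> is_Z2 (G a) \<and> is_Z2 (G b))
        \<or> (irreducible_sub E B \<and> card B \<ge> 2 \<and> \<not> (card B = 2 \<and> (\<forall>v\<in>B. is_Z2 (G v)))))"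

end

theory Submission
  imports Defs
begin

(* The graph product is the product of its block subgroups, which commute pairwise, and
   restricting words to a block B is a retraction.  So if z lies in the virtual centre, the reduced
   form r of its B-part commutes with a positive power of every word h supported on B.  Reduced
   words are unique up to commuting adjacent letters, hence for cyclically reduced h the words
   r h^M and h^M r are either both reduced or both not.  For an irreducible block, listing the
   vertices of B in an order adapted to the first and last letters of r makes exactly one of them
   reduced unless r is empty; the only escape is a block of two non-adjacent vertices, which is
   excluded using a vertex group with at least three elements.  For a pair {a, b} of Z/2 vertices,
   h = ab forces r to have even length, i.e. r is a word in ab and ba.  For a single vertex u the
   projection onto G_u carries the virtual centre into VZ(G_u).  Conversely, p in VZ(G_u)
   centralises the preimage of a finite-index subgroup of G_u, and ab centralises the kernel of the
   parity map counting the letters at a and b. *)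

section \<open>Finite-index subgroups and the virtual centre\<close>

lemma (in group) finite_rcosets_Int:
  assumes "subgroup K1 G" "subgroup K2 G" "finite (rcosets K1)" "finite (rcosets K2)"
  shows "finite (rcosets (K1 \<inter> K2))"
proof -
  have "(K1 \<inter> K2) #> g = (K1 #> g) \<inter> (K2 #> g)" if g: "g \<in> carrier G" for g
  proof
    show "(K1 #> g) \<inter> (K2 #> g) \<subseteq> (K1 \<inter> K2) #> g"
    proof
      fix y assume "y \<in> (K1 #> g) \<inter> (K2 #> g)"
      then obtain a b where ab: "a \<in> K1" "b \<in> K2" "y = a \<otimes> g" "y = b \<otimes> g"
        by (auto simp: r_coset_def)
      then have "a = b" using g assms(1,2) r_cancel subgroup.mem_carrier by metis
      then show "y \<in> (K1 \<inter> K2) #> g" using ab by (auto simp: r_coset_def)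
    qed
  qed (auto simp: r_coset_def)
  then have "rcosets (K1 \<inter> K2) \<subseteq> (\<lambda>(C, D). C \<inter> D) ` ((rcosets K1) \<times> (rcosets K2))"
    using assms(1,2) by (force simp: RCOSETS_def)
  then show ?thesis using assms(3,4) by (meson finite_SigmaI finite_imageI finite_subset)
qed

lemma (in group) finite_rcosets_carrier: "finite (rcosets (carrier G))"
proof -
  have "rcosets (carrier G) \<subseteq> {carrier G}"
    using coset_join2[OF _ subgroup_self] by (auto simp: RCOSETS_def)
  then show ?thesis by (rule finite_subset) simp
qed

lemma (in group) subgroup_virtual_centre: "subgroup (virtual_centre G) G"
proof (rule subgroupI)
  show "virtual_centre G \<subseteq> carrier G" by (auto simp: virtual_centre_def)
  have "\<one> \<in> virtual_centre G"
    using subgroup_self finite_rcosets_carrier by (auto simp: virtual_centre_def)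
  then show "virtual_centre G \<noteq> {}" by blast
next
  fix a assume "a \<in> virtual_centre G"
  then obtain K where K: "a \<in> carrier G" "subgroup K G" "finite (rcosets K)" "\<forall>k\<in>K. a \<otimes> k = k \<otimes> a"
    by (auto simp: virtual_centre_def)
  have "inv a \<otimes> k = k \<otimes> inv a" if k: "k \<in> K" for k
  proof -
    have kc: "k \<in> carrier G" using K(2) k subgroup.mem_carrier by metis
    have "inv a \<otimes> k = inv a \<otimes> (k \<otimes> a) \<otimes> inv a" using K(1) kc by (simp add: m_assoc)
    also have "\<dots> = inv a \<otimes> (a \<otimes> k) \<otimes> inv a" using K k by simp
    also have "\<dots> = k \<otimes> inv a" using K(1) kc by (simp add: m_assoc[symmetric])
    finally show ?thesis .
  qed
  then show "inv a \<in> virtual_centre G" using K unfolding virtual_centre_def by auto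
next
  fix a b assume "a \<in> virtual_centre G" "b \<in> virtual_centre G"
  then obtain K1 K2 where
    K1: "a \<in> carrier G" "subgroup K1 G" "finite (rcosets K1)" "\<forall>k\<in>K1. a \<otimes> k = k \<otimes> a" and
    K2: "b \<in> carrier G" "subgroup K2 G" "finite (rcosets K2)" "\<forall>k\<in>K2. b \<otimes> k = k \<otimes> b"
    by (auto simp: virtual_centre_def)
  have "a \<otimes> b \<otimes> k = k \<otimes> (a \<otimes> b)" if k: "k \<in> K1 \<inter> K2" for k
  proof -
    have kc: "k \<in> carrier G" using K1(2) k subgroup.mem_carrier by (metis IntD1)
    have "a \<otimes> b \<otimes> k = a \<otimes> (k \<otimes> b)" using K1(1) K2 k kc by (simp add: m_assoc)
    also have "\<dots> = k \<otimes> (a \<otimes> b)" using K1 K2(1) k kc by (simp add: m_assoc[symmetric])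
    finally show ?thesis .
  qed
  moreover have "subgroup (K1 \<inter> K2) G" "finite (rcosets (K1 \<inter> K2))"
    using K1 K2 subgroups_Inter_pair finite_rcosets_Int by auto
  ultimately show "a \<otimes> b \<in> virtual_centre G" using K1(1) K2(1) unfolding virtual_centre_def by blast
qed

text \<open>Pigeonhole on the cosets \<open>K #> g [^] n\<close>.\<close>
lemma (in group) finite_rcosets_pow_mem:
  assumes "subgroup K G" "finite (rcosets K)" "g \<in> carrier G"
  shows "\<exists>M\<ge>1. g [^] (M::nat) \<in> K"
proof -
  have "range (\<lambda>n::nat. K #> g [^] n) \<subseteq> rcosets K"
    using assms subgroup.subset by (auto intro: rcosetsI)
  then have "\<not> inj (\<lambda>n::nat. K #> g [^] n)"
    using assms(2) finite_subset infinite_UNIV_nat finite_imageD by blast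
  then obtain p q :: nat where pq: "p < q" "K #> g [^] p = K #> g [^] q"
    unfolding inj_def by (metis linorder_neqE_nat)
  have "g [^] q \<in> K #> g [^] p" using pq assms by (simp add: repr_independenceD)
  then have "g [^] q \<otimes> inv (g [^] p) \<in> K"
    using subgroup.rcos_module_imp[OF assms(1) is_group] assms by simp
  moreover have "g [^] q = g [^] (q - p) \<otimes> g [^] p" using pq assms by (simp add: nat_pow_mult)
  ultimately have "g [^] (q - p) \<in> K" using assms by (simp add: m_assoc)
  then show ?thesis using pq by (intro exI[of _ "q - p"]) auto
qed

lemma (in group) commute_generate:
  assumes e: "e \<in> carrier G" and T: "T \<subseteq> carrier G" and c: "\<forall>t\<in>T. e \<otimes> t = t \<otimes> e"
  shows "g \<in> generate G T \<Longrightarrow> e \<otimes> g = g \<otimes> e"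
proof (induction rule: generate.induct)
  case one then show ?case using e by simp
next
  case (incl h) then show ?case using c by blast
next
  case (inv h)
  have hc: "h \<in> carrier G" using inv T by blast
  have "e \<otimes> inv h = inv h \<otimes> (h \<otimes> e) \<otimes> inv h" using e hc by (simp add: m_assoc[symmetric])
  also have "\<dots> = inv h \<otimes> (e \<otimes> h) \<otimes> inv h" using c inv by simp
  also have "\<dots> = inv h \<otimes> e" using e hc by (simp add: m_assoc)
  finally show ?case .
next
  case (eng h1 h2)
  have c1: "h1 \<in> carrier G" "h2 \<in> carrier G" using eng.hyps generate_in_carrier T by blast+
  have "e \<otimes> (h1 \<otimes> h2) = h1 \<otimes> e \<otimes> h2" using eng.IH e c1 by (simp add: m_assoc[symmetric])
  also have "\<dots> = h1 \<otimes> (h2 \<otimes> e)" using eng.IH e c1 by (simp add: m_assoc)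
  finally show ?case using e c1 by (simp add: m_assoc)
qed

lemma (in group) finite_rcosets_of_finite:
  assumes "finite (carrier G)" "subgroup K G"
  shows "finite (rcosets K)"
proof -
  have "rcosets K \<subseteq> Pow (carrier G)"
    using r_coset_subset_G[OF subgroup.subset[OF assms(2)]] by (auto simp: RCOSETS_def)
  then show ?thesis using assms finite_subset by blast
qed

lemma (in group_hom) subgroup_vimage:
  assumes "subgroup K H"
  shows "subgroup (carrier G \<inter> h -` K) G"
proof (rule G.subgroupI)
  have "\<one> \<in> carrier G \<inter> h -` K" using subgroup.one_closed[OF assms] by simp
  then show "carrier G \<inter> h -` K \<noteq> {}" by blast
next
  fix a assume "a \<in> carrier G \<inter> h -` K"
  then show "inv a \<in> carrier G \<inter> h -` K" using subgroup.m_inv_closed[OF assms] by simp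
next
  fix a b assume "a \<in> carrier G \<inter> h -` K" "b \<in> carrier G \<inter> h -` K"
  then show "a \<otimes> b \<in> carrier G \<inter> h -` K" using subgroup.m_closed[OF assms] by simp
qed auto

lemma (in group_hom) finite_rcosets_vimage:
  assumes K: "subgroup K H" "finite (rcosets\<^bsub>H\<^esub> K)"
  shows "finite (rcosets (carrier G \<inter> h -` K))"
proof -
  let ?K = "carrier G \<inter> h -` K"
  have coset: "?K #> g = carrier G \<inter> h -` (K #>\<^bsub>H\<^esub> h g)" if g: "g \<in> carrier G" for g
  proof -
    have "x \<in> ?K #> g \<longleftrightarrow> x \<in> carrier G \<and> h x \<in> K #>\<^bsub>H\<^esub> h g" for x
    proof (cases "x \<in> carrier G")
      case True
      have "x \<in> ?K #> g \<longleftrightarrow> x \<otimes> inv g \<in> ?K"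
        using subgroup.rcos_module[OF subgroup_vimage[OF K(1)] G.is_group g True] .
      also have "\<dots> \<longleftrightarrow> h x \<otimes>\<^bsub>H\<^esub> inv\<^bsub>H\<^esub> h g \<in> K"
        using True g by simp
      also have "\<dots> \<longleftrightarrow> h x \<in> K #>\<^bsub>H\<^esub> h g"
        using subgroup.rcos_module[OF K(1) H.is_group hom_closed[OF g] hom_closed[OF True]] by simp
      finally show ?thesis using True by blast
    next
      case False
      have "?K #> g \<subseteq> carrier G" using G.r_coset_subset_G[of ?K g] g by blast
      then show ?thesis using False by blast
    qed
    then show ?thesis by auto
  qed
  have "rcosets ?K \<subseteq> (\<lambda>D. carrier G \<inter> h -` D) ` (rcosets\<^bsub>H\<^esub> K)"
  proof
    fix C assume "C \<in> rcosets ?K"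
    then obtain g where g: "g \<in> carrier G" "C = ?K #> g" by (auto simp: RCOSETS_def)
    then have "C = carrier G \<inter> h -` (K #>\<^bsub>H\<^esub> h g)" using coset by simp
    moreover have "K #>\<^bsub>H\<^esub> h g \<in> rcosets\<^bsub>H\<^esub> K" using g by (auto simp: RCOSETS_def)
    ultimately show "C \<in> (\<lambda>D. carrier G \<inter> h -` D) ` (rcosets\<^bsub>H\<^esub> K)" by (rule image_eqI)
  qed
  then show ?thesis using finite_subset finite_imageI[OF K(2)] by blast
qed

lemma (in group_hom) finite_rcosets_img:
  assumes surj: "h ` carrier G = carrier H" and K: "subgroup K G" "finite (rcosets K)"
  shows "finite (rcosets\<^bsub>H\<^esub> (h ` K))"
proof -
  have coset: "h ` K #>\<^bsub>H\<^esub> h g = h ` (K #> g)" if g: "g \<in> carrier G" for g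
  proof -
    have "h ` (K #> g) = (\<lambda>k. h (k \<otimes> g)) ` K" by (auto simp: r_coset_def)
    also have "\<dots> = (\<lambda>k. h k \<otimes>\<^bsub>H\<^esub> h g) ` K"
      using g subgroup.mem_carrier[OF K(1)] by (intro image_cong) simp_all
    also have "\<dots> = h ` K #>\<^bsub>H\<^esub> h g" by (auto simp: r_coset_def)
    finally show ?thesis by simp
  qed
  have "rcosets\<^bsub>H\<^esub> (h ` K) \<subseteq> image h ` (rcosets K)"
  proof
    fix C assume "C \<in> rcosets\<^bsub>H\<^esub> (h ` K)"
    then obtain y where y: "y \<in> carrier H" "C = h ` K #>\<^bsub>H\<^esub> y" by (auto simp: RCOSETS_def)
    from y(1) surj obtain g where "g \<in> carrier G" "y = h g" by auto
    with y(2) have g: "g \<in> carrier G" "C = h ` K #>\<^bsub>H\<^esub> h g" by simp_all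
    moreover have "K #> g \<in> rcosets K" using g by (auto simp: RCOSETS_def)
    ultimately show "C \<in> image h ` (rcosets K)" using coset by blast
  qed
  then show ?thesis using finite_subset finite_imageI[OF K(2)] by blast
qed

lemma (in group_hom) virtual_centre_img:
  assumes surj: "h ` carrier G = carrier H" and x: "x \<in> virtual_centre G"
  shows "h x \<in> virtual_centre H"
proof -
  obtain K where K: "x \<in> carrier G" "subgroup K G" "finite (rcosets K)" "\<forall>k\<in>K. x \<otimes> k = k \<otimes> x"
    using x by (auto simp: virtual_centre_def)
  have "h x \<otimes>\<^bsub>H\<^esub> h k = h k \<otimes>\<^bsub>H\<^esub> h x" if k: "k \<in> K" for k
  proof -
    have "k \<in> carrier G" using subgroup.mem_carrier[OF K(2) k] .
    moreover have "h (x \<otimes> k) = h (k \<otimes> x)" using K(4) k by simp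
    ultimately show ?thesis using K(1) by simp
  qed
  then have "\<forall>k\<in>h ` K. h x \<otimes>\<^bsub>H\<^esub> k = k \<otimes>\<^bsub>H\<^esub> h x" by blast
  then show ?thesis
    using K(1) subgroup_img_is_subgroup[OF K(2)] finite_rcosets_img[OF surj K(2,3)]
    unfolding virtual_centre_def by (blast intro: hom_closed)
qed

lemma Z2_square:
  assumes "group H" "carrier H = {\<one>\<^bsub>H\<^esub>, a}" "a \<noteq> \<one>\<^bsub>H\<^esub>"
  shows "a \<otimes>\<^bsub>H\<^esub> a = \<one>\<^bsub>H\<^esub>"
proof -
  interpret group H by fact
  have "a \<otimes>\<^bsub>H\<^esub> a \<noteq> a" using assms(2,3) l_cancel_one[of a a] by auto
  then show ?thesis using assms(2) m_closed[of a a] by auto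
qed

lemma is_Z2_iff:
  assumes "group H"
  shows "is_Z2 H \<longleftrightarrow> (\<exists>a. carrier H = {\<one>\<^bsub>H\<^esub>, a} \<and> a \<noteq> \<one>\<^bsub>H\<^esub>)"
proof
  assume "is_Z2 H"
  then obtain f where "f \<in> iso H (integer_mod_group 2)" unfolding is_Z2_def is_iso_def by blast
  then have "bij_betw f (carrier H) {0..<2}" by (simp add: iso_def carrier_integer_mod_group)
  then have "card (carrier H) = 2" by (simp add: bij_betw_same_card)
  then obtain x y where xy: "carrier H = {x, y}" "x \<noteq> y" by (meson card_2_iff)
  moreover have "\<one>\<^bsub>H\<^esub> \<in> carrier H" using assms by (simp add: group.is_monoid)
  ultimately show "\<exists>a. carrier H = {\<one>\<^bsub>H\<^esub>, a} \<and> a \<noteq> \<one>\<^bsub>H\<^esub>" by auto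
next
  assume "\<exists>a. carrier H = {\<one>\<^bsub>H\<^esub>, a} \<and> a \<noteq> \<one>\<^bsub>H\<^esub>"
  then obtain a where a: "carrier H = {\<one>\<^bsub>H\<^esub>, a}" "a \<noteq> \<one>\<^bsub>H\<^esub>" by blast
  interpret group H by fact
  have aa: "a \<otimes>\<^bsub>H\<^esub> a = \<one>\<^bsub>H\<^esub>" using Z2_square[OF assms a] .
  define f where "f x = (if x = \<one>\<^bsub>H\<^esub> then 0 else 1 :: int)" for x
  have "f \<in> hom H (integer_mod_group 2)"
    using a aa by (auto intro!: homI simp: f_def carrier_integer_mod_group)
  moreover have "bij_betw f (carrier H) (carrier (integer_mod_group 2))"
    using a by (auto simp: bij_betw_def inj_on_def f_def carrier_integer_mod_group)
  ultimately show "is_Z2 H" unfolding is_Z2_def is_iso_def iso_def by blast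
qed

lemma not_is_Z2_two_nontriv:
  assumes H: "group H" "carrier H \<noteq> {\<one>\<^bsub>H\<^esub>}" "\<not> is_Z2 H"
  shows "\<exists>x\<in>carrier H. \<exists>y\<in>carrier H. x \<noteq> \<one>\<^bsub>H\<^esub> \<and> y \<noteq> \<one>\<^bsub>H\<^esub> \<and> x \<noteq> y"
proof (rule ccontr)
  assume no_two: "\<not> ?thesis"
  have one: "\<one>\<^bsub>H\<^esub> \<in> carrier H" using H(1) by (simp add: group.is_monoid)
  then obtain x where x: "x \<in> carrier H" "x \<noteq> \<one>\<^bsub>H\<^esub>" using H(2) by blast
  have "y \<in> {\<one>\<^bsub>H\<^esub>, x}" if "y \<in> carrier H" for y
    using no_two x that by auto
  then have "carrier H = {\<one>\<^bsub>H\<^esub>, x}" using one x by auto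
  then show False using H(3) is_Z2_iff[OF H(1)] x(2) by blast
qed

lemma irreducible_sub_not_join:
  assumes "irreducible_sub E L" "A \<subseteq> L" "A \<noteq> {}" "L - A \<noteq> {}"
  shows "\<exists>a\<in>A. \<exists>b\<in>L - A. \<not> E a b"
proof (rule ccontr)
  assume "\<not> ?thesis"
  then have "\<exists>A B. A \<noteq> {} \<and> B \<noteq> {} \<and> A \<union> B = L \<and> A \<inter> B = {} \<and> (\<forall>a\<in>A. \<forall>b\<in>B. E a b)"
    using assms(2-4) by (intro exI[of _ A] exI[of _ "L - A"]) auto
  then show False using assms(1) unfolding irreducible_sub_def by blast
qed

section \<open>The graph product as a group of word classes\<close>

declare gp_eq.gp_trans [trans]

definition class_lift :: "('a \<Rightarrow> 'b) \<Rightarrow> 'a set \<Rightarrow> 'b" where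
  "class_lift f A = f (SOME x. x \<in> A)"

locale graph_prod =
  fixes V :: "'v set" and E :: "'v \<Rightarrow> 'v \<Rightarrow> bool" and G :: "'v \<Rightarrow> 'g monoid"
  assumes graph: "fin_graph V E"
    and vertex_group: "\<And>v. v \<in> V \<Longrightarrow> group (G v)"
begin

abbreviation "W \<equiv> gp_words V G"
abbreviation "eqw \<equiv> gp_eq V E G"
abbreviation "GP \<equiv> graph_product V E G"
abbreviation "cls \<equiv> gp_class V E G"
abbreviation verts :: "('v \<times> 'g) list \<Rightarrow> 'v set" where "verts w \<equiv> fst ` set w"

lemma adj_sym: "E u v \<Longrightarrow> E v u" using graph unfolding fin_graph_def by blast
lemma adj_irrefl: "\<not> E u u" using graph unfolding fin_graph_def by blast
lemma adj_in_V: "E u v \<Longrightarrow> u \<in> V \<and> v \<in> V" using graph unfolding fin_graph_def by blast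
lemma finite_V: "finite V" using graph unfolding fin_graph_def by blast

lemma one_in_vertex_group: "v \<in> V \<Longrightarrow> \<one>\<^bsub>G v\<^esub> \<in> carrier (G v)"
  using vertex_group group.is_monoid monoid.one_closed by metis

lemma mult_in_vertex_group:
  "v \<in> V \<Longrightarrow> g \<in> carrier (G v) \<Longrightarrow> h \<in> carrier (G v) \<Longrightarrow> g \<otimes>\<^bsub>G v\<^esub> h \<in> carrier (G v)"
  using vertex_group group.is_monoid monoid.m_closed by metis

lemma words_append[simp]: "xs @ ys \<in> W \<longleftrightarrow> xs \<in> W \<and> ys \<in> W"
  by (auto simp: gp_words_def)
lemma words_Cons[simp]: "x # ys \<in> W \<longleftrightarrow> fst x \<in> V \<and> snd x \<in> carrier (G (fst x)) \<and> ys \<in> W"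
  by (cases x) (auto simp: gp_words_def)
lemma words_Nil[simp]: "[] \<in> W" by (simp add: gp_words_def)

lemma words_verts: "w \<in> W \<Longrightarrow> verts w \<subseteq> V"
  by (auto simp: gp_words_def)

lemma eqw_words: "eqw w w' \<Longrightarrow> w \<in> W \<and> w' \<in> W"
  by (induction rule: gp_eq.induct) (auto simp: one_in_vertex_group mult_in_vertex_group)

lemma eqw_context: "eqw a b \<Longrightarrow> c \<in> W \<Longrightarrow> d \<in> W \<Longrightarrow> eqw (c @ a @ d) (c @ b @ d)"
proof (induction rule: gp_eq.induct)
  case (gp_refl w) then show ?case by (intro gp_eq.gp_refl) simp
next
  case (gp_sym w w') then show ?case by (blast intro: gp_eq.gp_sym)
next
  case (gp_trans w w' w'') then show ?case by (blast intro: gp_eq.gp_trans)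
next
  case (gp_unit xs ys v)
  have "eqw ((c @ xs) @ [(v, \<one>\<^bsub>G v\<^esub>)] @ (ys @ d)) ((c @ xs) @ (ys @ d))"
    by (rule gp_eq.gp_unit) (use gp_unit in auto)
  then show ?case by simp
next
  case (gp_merge xs ys v g h)
  have "eqw ((c @ xs) @ [(v, g), (v, h)] @ (ys @ d)) ((c @ xs) @ [(v, g \<otimes>\<^bsub>G v\<^esub> h)] @ (ys @ d))"
    by (rule gp_eq.gp_merge) (use gp_merge in auto)
  then show ?case by simp
next
  case (gp_comm xs ys u v g h)
  have "eqw ((c @ xs) @ [(u, g), (v, h)] @ (ys @ d)) ((c @ xs) @ [(v, h), (u, g)] @ (ys @ d))"
    by (rule gp_eq.gp_comm) (use gp_comm in auto)
  then show ?case by simp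
qed

lemma eqw_append: "eqw a b \<Longrightarrow> eqw c d \<Longrightarrow> eqw (a @ c) (b @ d)"
  using eqw_context[of a b "[]" c] eqw_context[of c d b "[]"] eqw_words by (auto intro: gp_trans)

lemma eqw_unit_letter: "v \<in> V \<Longrightarrow> eqw [(v, \<one>\<^bsub>G v\<^esub>)] []"
  using gp_unit[of "[]" V G "[]" v E] by simp

lemma eqw_merge_letters:
  "v \<in> V \<Longrightarrow> g \<in> carrier (G v) \<Longrightarrow> h \<in> carrier (G v) \<Longrightarrow> eqw [(v, g), (v, h)] [(v, g \<otimes>\<^bsub>G v\<^esub> h)]"
  using gp_merge[of "[]" V G "[]" v g h E] by simp

lemma eqw_comm_letters:
  "E u v \<Longrightarrow> g \<in> carrier (G u) \<Longrightarrow> h \<in> carrier (G v) \<Longrightarrow> eqw [(u, g), (v, h)] [(v, h), (u, g)]"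
  using gp_comm[of "[]" V G "[]" E u v g h] adj_in_V by simp

lemma cls_eq_iff: "w \<in> W \<Longrightarrow> cls w = cls w' \<longleftrightarrow> eqw w w'"
  unfolding gp_class_def by (auto intro: gp_refl gp_sym gp_trans)

lemma cls_mem: "w \<in> W \<Longrightarrow> w \<in> cls w" by (simp add: gp_class_def gp_refl)

lemma GP_carrier: "carrier GP = cls ` W" by (simp add: graph_product_def)

lemma cls_in_GP: "w \<in> W \<Longrightarrow> cls w \<in> carrier GP" by (simp add: GP_carrier)

lemma GP_one: "\<one>\<^bsub>GP\<^esub> = cls []" by (simp add: graph_product_def)

lemma GP_mult: "a \<in> W \<Longrightarrow> b \<in> W \<Longrightarrow> cls a \<otimes>\<^bsub>GP\<^esub> cls b = cls (a @ b)"
  unfolding graph_product_def gp_mult_def gp_class_def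
  by (auto intro: gp_trans eqw_append gp_sym gp_refl)

lemma GP_commute:
  "a \<in> W \<Longrightarrow> b \<in> W \<Longrightarrow> cls a \<otimes>\<^bsub>GP\<^esub> cls b = cls b \<otimes>\<^bsub>GP\<^esub> cls a \<longleftrightarrow> eqw (a @ b) (b @ a)"
  by (simp add: GP_mult cls_eq_iff)

definition word_inv :: "('v \<times> 'g) list \<Rightarrow> ('v \<times> 'g) list" where
  "word_inv w = rev (map (\<lambda>(v, g). (v, inv\<^bsub>G v\<^esub> g)) w)"

lemma word_inv_words: "w \<in> W \<Longrightarrow> word_inv w \<in> W"
  by (auto simp: word_inv_def gp_words_def group.inv_closed[OF vertex_group])

lemma word_inv_Cons: "word_inv ((v, g) # w) = word_inv w @ [(v, inv\<^bsub>G v\<^esub> g)]"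
  by (simp add: word_inv_def)

lemma eqw_append_word_inv: "w \<in> W \<Longrightarrow> eqw (w @ word_inv w) []"
proof (induction w)
  case Nil then show ?case by (simp add: word_inv_def gp_refl)
next
  case (Cons a w)
  obtain v g where a: "a = (v, g)" by (cases a)
  have v: "v \<in> V" and g: "g \<in> carrier (G v)" and w: "w \<in> W" using Cons.prems a by auto
  have ginv: "inv\<^bsub>G v\<^esub> g \<in> carrier (G v)" using group.inv_closed[OF vertex_group[OF v] g] .
  have "eqw ([(v, g)] @ (w @ word_inv w) @ [(v, inv\<^bsub>G v\<^esub> g)]) ([(v, g)] @ [] @ [(v, inv\<^bsub>G v\<^esub> g)])"
    by (rule eqw_context[OF Cons.IH[OF w]]) (use v g ginv in auto)
  also have "eqw \<dots> [(v, g \<otimes>\<^bsub>G v\<^esub> inv\<^bsub>G v\<^esub> g)]" using eqw_merge_letters[OF v g ginv] by simp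
  also have "eqw \<dots> []" using eqw_unit_letter[OF v] group.r_inv[OF vertex_group[OF v] g] by simp
  finally show ?case by (simp add: a word_inv_Cons)
qed

lemma word_inv_word_inv: "w \<in> W \<Longrightarrow> word_inv (word_inv w) = w"
  by (induction w) (auto simp: word_inv_def group.inv_inv[OF vertex_group] gp_words_def rev_map)

lemma group_GP: "group GP"
proof (rule groupI)
  show "\<one>\<^bsub>GP\<^esub> \<in> carrier GP" by (auto simp: GP_carrier GP_one)
  fix x assume "x \<in> carrier GP"
  then obtain w where w: "w \<in> W" "x = cls w" by (auto simp: GP_carrier)
  have "eqw (word_inv w @ w) []"
    using eqw_append_word_inv[OF word_inv_words[OF w(1)]] word_inv_word_inv[OF w(1)] by simp
  then have "cls (word_inv w) \<otimes>\<^bsub>GP\<^esub> x = \<one>\<^bsub>GP\<^esub>"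
    using w word_inv_words by (simp add: GP_mult cls_eq_iff GP_one)
  then show "\<exists>y\<in>carrier GP. y \<otimes>\<^bsub>GP\<^esub> x = \<one>\<^bsub>GP\<^esub>"
    using w(1) word_inv_words cls_in_GP by blast
qed (auto simp: GP_carrier GP_mult GP_one)

sublocale GP: group GP by (rule group_GP)

definition word_pow :: "('v \<times> 'g) list \<Rightarrow> nat \<Rightarrow> ('v \<times> 'g) list" where
  "word_pow h M = concat (replicate M h)"

lemma word_pow_0 [simp]: "word_pow h 0 = []"
  by (simp add: word_pow_def)

lemma word_pow_Suc: "word_pow h (Suc M) = h @ word_pow h M"
  by (simp add: word_pow_def)

lemma word_pow_Suc': "word_pow h (Suc M) = word_pow h M @ h"
  by (simp add: word_pow_def flip: replicate_append_same)

lemma word_pow_words: "h \<in> W \<Longrightarrow> word_pow h M \<in> W"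
  by (induction M) (simp_all add: word_pow_def)

lemma verts_word_pow: "M \<ge> 1 \<Longrightarrow> verts (word_pow h M) = verts h"
  by (induction M) (auto simp: word_pow_def)

lemma GP_pow: "w \<in> W \<Longrightarrow> cls w [^]\<^bsub>GP\<^esub> (n::nat) = cls (word_pow w n)"
  by (induction n) (simp_all add: GP_one GP_mult word_pow_Suc' word_pow_words)


subsection \<open>Normal forms\<close>

text \<open>\<open>front v w\<close>: some letter of \<open>w\<close> at \<open>v\<close> can be commuted to the front of \<open>w\<close>.\<close>

fun front :: "'v \<Rightarrow> ('v \<times> 'g) list \<Rightarrow> bool" where
  "front v [] = False"
| "front v ((u,h)#w) = (u = v \<or> (E v u \<and> front v w))"

definition nontriv :: "'v \<times> 'g \<Rightarrow> bool" where
  "nontriv x \<longleftrightarrow> fst x \<in> V \<and> snd x \<in> carrier (G (fst x)) \<and> snd x \<noteq> \<one>\<^bsub>G (fst x)\<^esub>"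

fun reduced :: "('v \<times> 'g) list \<Rightarrow> bool" where
  "reduced [] = True"
| "reduced ((v,g)#w) = (nontriv (v,g) \<and> \<not> front v w \<and> reduced w)"

text \<open>A letter acts on reduced words by multiplying on the left and reducing. The action is
  compatible with the defining relations up to shuffling commuting letters, so two equal reduced
  words are related by such shuffles.\<close>

fun act_letter :: "'v \<Rightarrow> 'g \<Rightarrow> ('v \<times> 'g) list \<Rightarrow> ('v \<times> 'g) list" where
  "act_letter v g [] = (if g = \<one>\<^bsub>G v\<^esub> then [] else [(v,g)])"
| "act_letter v g ((u,h)#w) = (if u = v then (if g \<otimes>\<^bsub>G v\<^esub> h = \<one>\<^bsub>G v\<^esub> then w else (v, g \<otimes>\<^bsub>G v\<^esub> h)#w)
     else if E v u then (u,h) # act_letter v g w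
     else (if g = \<one>\<^bsub>G v\<^esub> then (u,h)#w else (v,g)#(u,h)#w))"

definition swap_step :: "('v \<times> 'g) list \<Rightarrow> ('v \<times> 'g) list \<Rightarrow> bool" where
  "swap_step w w' \<longleftrightarrow> (\<exists>A a x b y B. E a b \<and> w = A @ (a,x)#(b,y)#B \<and> w' = A @ (b,y)#(a,x)#B)"

abbreviation "shuffle_eq \<equiv> swap_step\<^sup>*\<^sup>*"

lemma swap_step_sym: "swap_step w w' \<Longrightarrow> swap_step w' w"
  unfolding swap_step_def using adj_sym by blast

lemma shuffle_eq_sym: "shuffle_eq w w' \<Longrightarrow> shuffle_eq w' w"
  by (induction rule: rtranclp_induct) (auto intro: converse_rtranclp_into_rtranclp swap_step_sym)

lemma shuffle_eq_trans: "shuffle_eq a b \<Longrightarrow> shuffle_eq b c \<Longrightarrow> shuffle_eq a c"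
  by (rule rtranclp_trans)

lemma swap_step_ctxt: "swap_step a b \<Longrightarrow> swap_step (c @ a @ d) (c @ b @ d)"
  unfolding swap_step_def by (metis append.assoc append_Cons)

lemma shuffle_eq_ctxt: "shuffle_eq a b \<Longrightarrow> shuffle_eq (c @ a @ d) (c @ b @ d)"
  by (induction rule: rtranclp_induct) (auto intro: rtranclp.rtrancl_into_rtrancl swap_step_ctxt)

lemma shuffle_eq_Cons: "shuffle_eq a b \<Longrightarrow> shuffle_eq (x # a) (x # b)"
  using shuffle_eq_ctxt[of a b "[x]" "[]"] by simp

lemma shuffle_eq_swap: "E a b \<Longrightarrow> shuffle_eq ((a,x)#(b,y)#B) ((b,y)#(a,x)#B)"
  by (rule r_into_rtranclp) (unfold swap_step_def, use append_Nil in blast)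

lemma swap_step_length: "swap_step a b \<Longrightarrow> length a = length b"
  unfolding swap_step_def by auto

lemma shuffle_eq_length: "shuffle_eq a b \<Longrightarrow> length a = length b"
  by (induction rule: rtranclp_induct) (auto dest: swap_step_length)

lemma act_letter_swap_base:
  assumes "E a b"
  shows "shuffle_eq (act_letter v g ((a,x)#(b,y)#B)) (act_letter v g ((b,y)#(a,x)#B))"
proof -
  have ab: "a \<noteq> b" using assms adj_irrefl by blast
  consider "a = v" | "b = v" | "a \<noteq> v" "b \<noteq> v" by blast
  then show ?thesis
  proof cases
    case 1
    then have "E v b" using assms by simp
    then show ?thesis using 1 ab by (auto intro: shuffle_eq_swap simp: adj_sym)
  next
    case 2
    then have "E v a" using assms adj_sym by simp
    then show ?thesis using 2 ab by (auto intro: shuffle_eq_swap simp: adj_sym)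
  next
    case 3
    have s1: "shuffle_eq ((a,x)#(v,g)#(b,y)#B) ((v,g)#(b,y)#(a,x)#B)" if "E v a"
    proof -
      have "shuffle_eq ((a,x)#(v,g)#(b,y)#B) ((v,g)#(a,x)#(b,y)#B)" using that by (auto intro: shuffle_eq_swap simp: adj_sym)
      moreover have "shuffle_eq ((v,g)#(a,x)#(b,y)#B) ((v,g)#(b,y)#(a,x)#B)" using assms by (auto intro: shuffle_eq_Cons shuffle_eq_swap)
      ultimately show ?thesis by (rule shuffle_eq_trans)
    qed
    have s2: "shuffle_eq ((v,g)#(a,x)#(b,y)#B) ((b,y)#(v,g)#(a,x)#B)" if "E v b"
    proof -
      have "shuffle_eq ((v,g)#(a,x)#(b,y)#B) ((v,g)#(b,y)#(a,x)#B)" using assms by (auto intro: shuffle_eq_Cons shuffle_eq_swap)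
      moreover have "shuffle_eq ((v,g)#(b,y)#(a,x)#B) ((b,y)#(v,g)#(a,x)#B)" using that by (auto intro: shuffle_eq_swap)
      ultimately show ?thesis by (rule shuffle_eq_trans)
    qed
    show ?thesis using 3 s1 s2 assms
      by (cases "E v a"; cases "E v b"; auto intro: shuffle_eq_Cons shuffle_eq_swap)
  qed
qed

lemma act_letter_swap:
  assumes "E a b"
  shows "shuffle_eq (act_letter v g (A @ (a,x)#(b,y)#B)) (act_letter v g (A @ (b,y)#(a,x)#B))"
proof (induction A)
  case Nil then show ?case using act_letter_swap_base[OF assms] by simp
next
  case (Cons c A)
  obtain u h where c: "c = (u,h)" by (cases c)
  have s: "shuffle_eq (A @ (a,x)#(b,y)#B) (A @ (b,y)#(a,x)#B)"
    using shuffle_eq_ctxt[OF shuffle_eq_swap[OF assms], where c=A and d="[]"] by simp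
  show ?case using Cons s unfolding c by (auto intro: shuffle_eq_Cons)
qed

lemma act_letter_swap_step: "swap_step w w' \<Longrightarrow> shuffle_eq (act_letter v g w) (act_letter v g w')"
proof -
  assume "swap_step w w'"
  then obtain A a x b y B where "E a b" "w = A @ (a,x)#(b,y)#B" "w' = A @ (b,y)#(a,x)#B"
    unfolding swap_step_def by blast
  then show ?thesis using act_letter_swap by simp
qed

lemma act_letter_shuffle_eq: "shuffle_eq w w' \<Longrightarrow> shuffle_eq (act_letter v g w) (act_letter v g w')"
  by (induction rule: rtranclp_induct) (auto intro: shuffle_eq_trans act_letter_swap_step)

definition act_word :: "('v \<times> 'g) list \<Rightarrow> ('v \<times> 'g) list \<Rightarrow> ('v \<times> 'g) list" where
  "act_word xs w = foldr (\<lambda>(v,g) acc. act_letter v g acc) xs w"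

lemma act_word_Nil[simp]: "act_word [] w = w" by (simp add: act_word_def)
lemma act_word_Cons[simp]: "act_word ((v,g)#xs) w = act_letter v g (act_word xs w)" by (simp add: act_word_def)
lemma act_word_append: "act_word (xs @ ys) w = act_word xs (act_word ys w)" by (simp add: act_word_def)

lemma act_word_shuffle_eq: "shuffle_eq w w' \<Longrightarrow> shuffle_eq (act_word xs w) (act_word xs w')"
proof (induction xs)
  case (Cons a xs) then show ?case by (cases a) (auto intro: act_letter_shuffle_eq)
qed simp

lemma front_act_letter: "E u v \<Longrightarrow> front u (act_letter v g w) \<Longrightarrow> front u w"
proof (induction w)
  case Nil then show ?case using adj_irrefl by (auto split: if_splits)
next
  case (Cons c w)
  obtain c1 h where c: "c = (c1,h)" by (cases c)
  show ?case using Cons unfolding c using adj_irrefl by (auto split: if_splits)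
qed

lemma reduced_act_letter:
  assumes "reduced w" "v \<in> V" "g \<in> carrier (G v)"
  shows "reduced (act_letter v g w)"
  using assms
proof (induction w)
  case Nil then show ?case by (auto simp: nontriv_def)
next
  case (Cons c w)
  obtain u h where c: "c = (u,h)" by (cases c)
  have gr: "group (G v)" using vertex_group Cons.prems by auto
  have hc: "h \<in> carrier (G u)" using Cons.prems c by (auto simp: nontriv_def)
  show ?case
  proof (cases "u = v")
    case True
    then show ?thesis using Cons.prems c hc by (auto simp: nontriv_def monoid.m_closed[OF group.is_monoid[OF gr]])
  next
    case False
    show ?thesis
    proof (cases "E v u")
      case True
      have "\<not> front u (act_letter v g w)" using front_act_letter[of u v g w] True adj_sym Cons.prems c by auto
      then show ?thesis using Cons c True False by auto
    next
      case F2: False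
      then show ?thesis using Cons.prems c False by (auto simp: nontriv_def)
    qed
  qed
qed

lemma act_letter_not_front:
  assumes "\<not> front v w"
  shows "shuffle_eq (act_letter v g w) (if g = \<one>\<^bsub>G v\<^esub> then w else (v,g)#w)"
  using assms
proof (induction w)
  case (Cons c w)
  obtain u h where c: "c = (u,h)" by (cases c)
  have uv: "u \<noteq> v" using Cons.prems c by auto
  show ?case
  proof (cases "E v u")
    case True
    then have nr: "\<not> front v w" using Cons.prems c by auto
    have a: "shuffle_eq (act_letter v g (c#w)) ((u,h) # (if g = \<one>\<^bsub>G v\<^esub> then w else (v,g)#w))"
      using Cons.IH[OF nr] uv True c by (auto intro: shuffle_eq_Cons)
    have b: "shuffle_eq ((u,h)#(v,g)#w) ((v,g)#(u,h)#w)" using True adj_sym by (auto intro: shuffle_eq_swap)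
    show ?thesis using a b c by (auto split: if_splits intro: shuffle_eq_trans)
  next
    case False then show ?thesis using uv c by auto
  qed
qed auto

lemma act_letter_merge:
  assumes "reduced w" "v \<in> V" "g \<in> carrier (G v)" "h \<in> carrier (G v)"
  shows "shuffle_eq (act_letter v g (act_letter v h w)) (act_letter v (g \<otimes>\<^bsub>G v\<^esub> h) w)"
  using assms
proof (induction w)
  case Nil
  have gr: "group (G v)" using vertex_group Nil by auto
  show ?case using Nil by (auto simp: group.is_monoid[OF gr] monoid.r_one[OF group.is_monoid[OF gr]])
next
  case (Cons c w)
  obtain u k where c: "c = (u,k)" by (cases c)
  have gr: "group (G v)" using vertex_group Cons.prems by auto
  note M = group.is_monoid[OF gr]
  show ?case
  proof (cases "u = v")
    case True
    have k: "k \<in> carrier (G v)" and nr: "\<not> front v w" using Cons.prems c True by (auto simp: nontriv_def)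
    have assoc: "g \<otimes>\<^bsub>G v\<^esub> (h \<otimes>\<^bsub>G v\<^esub> k) = g \<otimes>\<^bsub>G v\<^esub> h \<otimes>\<^bsub>G v\<^esub> k"
      using Cons.prems k by (simp add: monoid.m_assoc[OF M])
    show ?thesis
    proof (cases "h \<otimes>\<^bsub>G v\<^esub> k = \<one>\<^bsub>G v\<^esub>")
      case hk: True
      then have "g \<otimes>\<^bsub>G v\<^esub> h \<otimes>\<^bsub>G v\<^esub> k = g" using assoc Cons.prems by (simp add: monoid.r_one[OF M])
      then show ?thesis using hk True c act_letter_not_front[OF nr, of g] by auto
    next
      case False
      then show ?thesis using True c assoc by auto
    qed
  next
    case False
    show ?thesis
    proof (cases "E v u")
      case True
      then have "reduced w" using Cons.prems c by auto
      then show ?thesis using Cons.IH Cons.prems True False c by (auto intro: shuffle_eq_Cons)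
    next
      case F2: False
      have "g \<otimes>\<^bsub>G v\<^esub> \<one>\<^bsub>G v\<^esub> = g" using Cons.prems by (simp add: monoid.r_one[OF M])
      then show ?thesis using F2 False c by auto
    qed
  qed
qed

lemma act_letter_one:
  assumes "reduced w" "v \<in> V"
  shows "act_letter v \<one>\<^bsub>G v\<^esub> w = w"
  using assms
proof (induction w)
  case (Cons c w)
  obtain u k where c: "c = (u,k)" by (cases c)
  have gr: "group (G v)" using vertex_group Cons.prems by auto
  show ?case using Cons c by (auto simp: nontriv_def monoid.l_one[OF group.is_monoid[OF gr]])
qed simp

lemma act_letter_comm:
  assumes "E u v"
  shows "shuffle_eq (act_letter u g (act_letter v h w)) (act_letter v h (act_letter u g w))"
proof (induction w)
  case Nil
  have "E v u" using assms adj_sym by auto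
  then show ?case using assms adj_irrefl by (auto intro: shuffle_eq_swap)
next
  case (Cons c w)
  obtain c1 k where c: "c = (c1,k)" by (cases c)
  have uv: "u \<noteq> v" using assms adj_irrefl by auto
  have vu: "E v u" using assms adj_sym by auto
  consider "c1 = v" | "c1 = u" | "c1 \<noteq> u" "c1 \<noteq> v" by blast
  then show ?case
  proof cases
    case 1 then show ?thesis using c uv assms vu by auto
  next
    case 2 then show ?thesis using c uv assms vu by auto
  next
    case 3
    show ?thesis using 3 c uv assms vu Cons.IH
      by (cases "E u c1"; cases "E v c1"; auto intro: shuffle_eq_Cons shuffle_eq_swap)
  qed
qed

lemma reduced_act_word: "reduced w \<Longrightarrow> xs \<in> W \<Longrightarrow> reduced (act_word xs w)"
proof (induction xs)
  case (Cons a xs) then show ?case by (cases a) (auto intro: reduced_act_letter)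
qed simp

lemma eqw_act_word: "eqw x y \<Longrightarrow> reduced w \<Longrightarrow> shuffle_eq (act_word x w) (act_word y w)"
proof (induction arbitrary: w rule: gp_eq.induct)
  case (gp_sym w1 w2) then show ?case using shuffle_eq_sym by blast
next
  case (gp_trans w1 w2 w3) then show ?case using shuffle_eq_trans by blast
next
  case (gp_unit xs ys v)
  have "reduced (act_word ys w)" using gp_unit reduced_act_word by auto
  then show ?case using gp_unit by (simp add: act_word_append act_letter_one)
next
  case (gp_merge xs ys v g h)
  have "reduced (act_word ys w)" using gp_merge reduced_act_word by auto
  then have "shuffle_eq (act_letter v g (act_letter v h (act_word ys w))) (act_letter v (g \<otimes>\<^bsub>G v\<^esub> h) (act_word ys w))"
    using act_letter_merge gp_merge by auto
  then show ?case by (simp add: act_word_append act_word_shuffle_eq)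
next
  case (gp_comm xs ys u v g h)
  have "shuffle_eq (act_letter u g (act_letter v h (act_word ys w))) (act_letter v h (act_letter u g (act_word ys w)))"
    using act_letter_comm gp_comm by auto
  then show ?case by (simp add: act_word_append act_word_shuffle_eq)
qed simp

lemma act_word_reduced: "reduced r \<Longrightarrow> shuffle_eq (act_word r []) r"
proof (induction r)
  case (Cons x r)
  obtain v g where x: "x = (v,g)" by (cases x)
  have r: "reduced r" and nr: "\<not> front v r" and g1: "g \<noteq> \<one>\<^bsub>G v\<^esub>" using Cons.prems x by (auto simp: nontriv_def)
  have "shuffle_eq (act_letter v g (act_word r [])) (act_letter v g r)" using act_letter_shuffle_eq[OF Cons.IH[OF r]] .
  moreover have "shuffle_eq (act_letter v g r) ((v,g)#r)" using act_letter_not_front[OF nr, of g] g1 by simp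
  ultimately show ?case using x by (auto intro: shuffle_eq_trans)
qed simp

lemma reduced_words: "reduced r \<Longrightarrow> r \<in> W"
proof (induction r)
  case (Cons x r) then show ?case by (cases x) (auto simp: nontriv_def)
qed simp

theorem reduced_eqw_imp_shuffles: "reduced r1 \<Longrightarrow> reduced r2 \<Longrightarrow> eqw r1 r2 \<Longrightarrow> shuffle_eq r1 r2"
proof -
  assume r1: "reduced r1" and r2: "reduced r2" and e: "eqw r1 r2"
  have "shuffle_eq (act_word r1 []) (act_word r2 [])" using eqw_act_word[OF e] by simp
  then show ?thesis using act_word_reduced[OF r1] act_word_reduced[OF r2] by (meson shuffle_eq_sym shuffle_eq_trans)
qed


subsection \<open>Reduced words\<close>

definition adj_all :: "'v \<Rightarrow> ('v \<times> 'g) list \<Rightarrow> bool" where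
  "adj_all v w \<longleftrightarrow> (\<forall>u\<in>verts w. E v u)"

lemma adj_all_simps [simp]:
  "adj_all v []" "adj_all v ((u, h) # w) \<longleftrightarrow> E v u \<and> adj_all v w"
  "adj_all v (p @ q) \<longleftrightarrow> adj_all v p \<and> adj_all v q" "adj_all v (rev p) \<longleftrightarrow> adj_all v p"
  by (auto simp: adj_all_def)

lemma adj_all_notin: "adj_all v w \<Longrightarrow> v \<notin> verts w"
  using adj_irrefl by (auto simp: adj_all_def)

lemma front_append: "front v (p @ q) \<longleftrightarrow> front v p \<or> (adj_all v p \<and> front v q)"
proof (induction p)
  case (Cons x p) then show ?case by (cases x) (auto simp: adj_irrefl)
qed simp

lemma front_verts: "front v w \<Longrightarrow> v \<in> verts w"
proof (induction w)
  case (Cons x w) then show ?case by (cases x) auto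
qed simp

lemma front_split: "front v w \<Longrightarrow> \<exists>p h q. w = p @ (v, h) # q \<and> adj_all v p"
proof (induction w)
  case (Cons x w)
  obtain u k where x: "x = (u, k)" by (cases x)
  show ?case
  proof (cases "u = v")
    case True then show ?thesis using x by (intro exI[of _ "[]"]) auto
  next
    case False
    then have "E v u" "front v w" using Cons.prems x by auto
    then obtain p h q where "w = p @ (v, h) # q" "adj_all v p" using Cons.IH by blast
    then show ?thesis using x \<open>E v u\<close> by (intro exI[of _ "(u, k) # p"]) auto
  qed
qed simp

lemma front_clique: "front u w \<Longrightarrow> front v w \<Longrightarrow> u \<noteq> v \<Longrightarrow> E u v"
proof (induction w)
  case (Cons x w)
  then show ?case using adj_sym by (cases x) auto
qed simp

lemma reduced_append:
  "reduced (p @ q) \<longleftrightarrow> reduced p \<and> reduced q \<and> (\<forall>v. front v (rev p) \<longrightarrow> \<not> front v q)"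
proof (induction p)
  case (Cons x p)
  obtain v g where x: "x = (v, g)" by (cases x)
  have "front u (rev (x # p)) \<longleftrightarrow> front u (rev p) \<or> (adj_all u p \<and> u = v)" for u
    using x by (auto simp: front_append)
  then show ?case using Cons.IH unfolding x by (auto simp: front_append)
qed simp

lemma reduced_distinct: "distinct (map fst h) \<Longrightarrow> \<forall>x\<in>set h. nontriv x \<Longrightarrow> reduced h"
proof (induction h)
  case (Cons x h)
  obtain v g where x: "x = (v, g)" by (cases x)
  have "\<not> front v h" using front_verts Cons.prems x by force
  then show ?case using Cons x by auto
qed simp

lemma eqw_move_front:
  "adj_all v p \<Longrightarrow> p \<in> W \<Longrightarrow> v \<in> V \<Longrightarrow> h \<in> carrier (G v) \<Longrightarrow> eqw (p @ [(v, h)]) ((v, h) # p)"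
proof (induction p)
  case Nil then show ?case by (auto intro: gp_refl)
next
  case (Cons x p)
  obtain u k where x: "x = (u, k)" by (cases x)
  have "eqw ([(u, k)] @ (p @ [(v, h)]) @ []) ([(u, k)] @ ((v, h) # p) @ [])"
    by (rule eqw_context) (use Cons x in auto)
  also have "eqw \<dots> ([] @ [(v, h), (u, k)] @ p)"
    using eqw_context[OF eqw_comm_letters, of u v k h "[]" p] Cons.prems x adj_sym by auto
  finally show ?case using x by simp
qed

lemma eqw_append_commute_adj:
  assumes "u \<in> W" "R \<in> W" "\<forall>a\<in>verts u. \<forall>b\<in>verts R. E a b"
  shows "eqw (u @ R) (R @ u)"
  using assms
proof (induction u)
  case Nil then show ?case by (simp add: gp_refl)
next
  case (Cons x u)
  obtain v g where x: "x = (v, g)" by (cases x)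
  have v: "v \<in> V" "g \<in> carrier (G v)" "u \<in> W" using Cons.prems(1) x by auto
  have "adj_all v R" using Cons.prems(3) x by (auto simp: adj_all_def)
  then have move: "eqw ((v, g) # R) (R @ [(v, g)])" using gp_sym[OF eqw_move_front] Cons.prems(2) v by blast
  have "eqw ([(v, g)] @ (u @ R) @ []) ([(v, g)] @ (R @ u) @ [])"
    by (rule eqw_context) (use Cons v in auto)
  also have "eqw \<dots> (R @ [(v, g)] @ u)"
    using eqw_append[OF move gp_refl[OF v(3)]] by simp
  finally show ?case using x by simp
qed

lemma not_reduced_shorten:
  "w \<in> W \<Longrightarrow> \<not> reduced w \<Longrightarrow> \<exists>w'. eqw w w' \<and> length w' < length w \<and> verts w' \<subseteq> verts w"
proof (induction w)
  case (Cons x w)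
  obtain v g where x: "x = (v, g)" by (cases x)
  have v: "v \<in> V" and g: "g \<in> carrier (G v)" and w: "w \<in> W" using Cons.prems x by auto
  consider "g = \<one>\<^bsub>G v\<^esub>" | "front v w" | "\<not> reduced w"
    using Cons.prems x v g by (auto simp: nontriv_def)
  then show ?case
  proof cases
    case 1
    have "eqw (x # w) w" using eqw_context[OF eqw_unit_letter[OF v], of "[]" w] 1 w x by simp
    then show ?thesis by (intro exI[of _ w]) auto
  next
    case 2
    then obtain p h q where pq: "w = p @ (v, h) # q" "adj_all v p" using front_split by blast
    have p: "p \<in> W" and h: "h \<in> carrier (G v)" and q: "q \<in> W" using w pq by auto
    have "eqw ([(v, g)] @ (p @ [(v, h)]) @ q) ([(v, g)] @ ((v, h) # p) @ q)"
      by (rule eqw_context[OF eqw_move_front[OF pq(2) p v h]]) (use v g q in auto)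
    also have "eqw \<dots> ([] @ [(v, g \<otimes>\<^bsub>G v\<^esub> h)] @ (p @ q))"
      using eqw_context[OF eqw_merge_letters[OF v g h], of "[]" "p @ q"] p q by simp
    finally have "eqw (x # w) ((v, g \<otimes>\<^bsub>G v\<^esub> h) # p @ q)" using x pq by simp
    then show ?thesis using pq x by (intro exI[of _ "(v, g \<otimes>\<^bsub>G v\<^esub> h) # p @ q"]) auto
  next
    case 3
    then obtain w' where w': "eqw w w'" "length w' < length w" "verts w' \<subseteq> verts w"
      using Cons.IH w by blast
    have "eqw ([x] @ w @ []) ([x] @ w' @ [])" by (rule eqw_context[OF w'(1)]) (use Cons.prems in auto)
    then show ?thesis using w' by (intro exI[of _ "x # w'"]) auto
  qed
qed simp

lemma exists_reduced:
  "w \<in> W \<Longrightarrow> \<exists>r. reduced r \<and> eqw w r \<and> length r \<le> length w \<and> verts r \<subseteq> verts w"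
proof (induction "length w" arbitrary: w rule: less_induct)
  case less
  show ?case
  proof (cases "reduced w")
    case True then show ?thesis using less.prems by (auto intro: gp_refl)
  next
    case False
    then obtain w' where w': "eqw w w'" "length w' < length w" "verts w' \<subseteq> verts w"
      using not_reduced_shorten less.prems by blast
    then obtain r where "reduced r" "eqw w' r" "length r \<le> length w'" "verts r \<subseteq> verts w'"
      using less.hyps[of w'] eqw_words by blast
    then show ?thesis using w' by (intro exI[of _ r]) (auto intro: gp_trans)
  qed
qed

lemma reduced_length_le: "reduced r \<Longrightarrow> eqw r w \<Longrightarrow> length r \<le> length w"
  using exists_reduced[of w] eqw_words reduced_eqw_imp_shuffles shuffle_eq_length
  by (metis gp_trans)

lemma reduced_eqw_append_commute:
  assumes "reduced (x @ y)" "eqw (x @ y) (y @ x)"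
  shows "reduced (y @ x)"
proof (rule ccontr)
  assume "\<not> reduced (y @ x)"
  then obtain w where w: "eqw (y @ x) w" "length w < length (y @ x)"
    using not_reduced_shorten eqw_words[OF assms(2)] by blast
  have "length (x @ y) \<le> length w" using reduced_length_le[OF assms(1) gp_trans[OF assms(2) w(1)]] .
  then show False using w(2) by simp
qed

lemma shuffle_eq_independent:
  "shuffle_eq w w' \<Longrightarrow> \<forall>a\<in>verts w. \<forall>b\<in>verts w. \<not> E a b \<Longrightarrow> w' = w"
proof (induction rule: rtranclp_induct)
  case (step y z) then show ?case unfolding swap_step_def by fastforce
qed simp

lemma reduced_eqw_independent:
  assumes "reduced u" "reduced w" "eqw u w" "\<forall>a\<in>verts u. \<forall>b\<in>verts u. \<not> E a b"
  shows "w = u"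
  using shuffle_eq_independent reduced_eqw_imp_shuffles assms by blast

lemma front_word_pow: "M \<ge> 1 \<Longrightarrow> front v (word_pow h M) \<longleftrightarrow> front v h"
proof (cases "v \<in> verts h")
  case True
  then have "\<not> adj_all v h" using adj_all_notin by blast
  then show "M \<ge> 1 \<Longrightarrow> ?thesis" by (cases M) (simp_all add: word_pow_Suc front_append)
next
  case False
  show "M \<ge> 1 \<Longrightarrow> ?thesis"
    using False front_verts[of v "word_pow h M"] front_verts[of v h] verts_word_pow by auto
qed

lemma front_rev_word_pow: "M \<ge> 1 \<Longrightarrow> front v (rev (word_pow h M)) \<longleftrightarrow> front v (rev h)"
proof (cases "v \<in> verts h")
  case True
  then have "\<not> adj_all v h" using adj_all_notin by blast
  then show "M \<ge> 1 \<Longrightarrow> ?thesis" by (cases M) (simp_all add: word_pow_Suc' front_append)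
next
  case False
  show "M \<ge> 1 \<Longrightarrow> ?thesis"
    using False front_verts[of v "rev (word_pow h M)"] front_verts[of v "rev h"] verts_word_pow by auto
qed

definition cyclically_reduced :: "('v \<times> 'g) list \<Rightarrow> bool" where
  "cyclically_reduced h \<longleftrightarrow> reduced h \<and> (\<forall>v. front v (rev h) \<longrightarrow> \<not> front v h)"

lemma reduced_word_pow: "cyclically_reduced h \<Longrightarrow> reduced (word_pow h M)"
proof (induction M)
  case (Suc M)
  note IH = Suc.IH and h = Suc.prems
  show ?case
  proof (cases M)
    case 0 then show ?thesis using h by (simp add: word_pow_Suc cyclically_reduced_def)
  next
    case (Suc k)
    then have "front v (word_pow h M) \<longleftrightarrow> front v h" for v by (simp add: front_word_pow)
    then show ?thesis using IH h by (simp add: word_pow_Suc reduced_append cyclically_reduced_def)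
  qed
qed simp

lemma reduced_append_word_pow:
  "reduced z \<Longrightarrow> cyclically_reduced h \<Longrightarrow> M \<ge> 1 \<Longrightarrow>
    reduced (z @ word_pow h M) \<longleftrightarrow> (\<forall>v. front v (rev z) \<longrightarrow> \<not> front v h)"
  using reduced_word_pow by (simp add: reduced_append front_word_pow)

lemma reduced_word_pow_append:
  "reduced z \<Longrightarrow> cyclically_reduced h \<Longrightarrow> M \<ge> 1 \<Longrightarrow>
    reduced (word_pow h M @ z) \<longleftrightarrow> (\<forall>v. front v (rev h) \<longrightarrow> \<not> front v z)"
  using reduced_word_pow by (simp add: reduced_append front_rev_word_pow)

lemma commute_word_pow_reduced_iff:
  assumes z: "reduced z" and h: "cyclically_reduced h" and M: "M \<ge> 1"
    and comm: "eqw (z @ word_pow h M) (word_pow h M @ z)"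
  shows "(\<forall>v. front v (rev z) \<longrightarrow> \<not> front v h) \<longleftrightarrow> (\<forall>v. front v (rev h) \<longrightarrow> \<not> front v z)"
  using reduced_append_word_pow[OF z h M] reduced_word_pow_append[OF z h M]
    reduced_eqw_append_commute comm gp_sym by blast

subsection \<open>Irreducible blocks\<close>

definition commutes_with_powers :: "('v \<times> 'g) list \<Rightarrow> 'v set \<Rightarrow> bool" where
  "commutes_with_powers z S \<longleftrightarrow>
     (\<forall>h\<in>W. verts h \<subseteq> S \<longrightarrow> (\<exists>M\<ge>1. eqw (z @ word_pow h M) (word_pow h M @ z)))"

definition some_nontriv :: "'v \<Rightarrow> 'g" where
  "some_nontriv v = (SOME x. x \<in> carrier (G v) \<and> x \<noteq> \<one>\<^bsub>G v\<^esub>)"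

definition letters :: "'v list \<Rightarrow> ('v \<times> 'g) list" where
  "letters vs = map (\<lambda>v. (v, some_nontriv v)) vs"

lemma letters_simps [simp]:
  "letters [] = []" "letters (v # vs) = (v, some_nontriv v) # letters vs"
  "letters (vs @ us) = letters vs @ letters us" "rev (letters vs) = letters (rev vs)"
  "map fst (letters vs) = vs" "verts (letters vs) = set vs"
  by (auto simp: letters_def rev_map image_image comp_def)

lemma nontriv_some_nontriv:
  assumes "v \<in> V" "carrier (G v) \<noteq> {\<one>\<^bsub>G v\<^esub>}"
  shows "nontriv (v, some_nontriv v)"
proof -
  have "\<exists>x. x \<in> carrier (G v) \<and> x \<noteq> \<one>\<^bsub>G v\<^esub>" using assms one_in_vertex_group by blast
  then have "some_nontriv v \<in> carrier (G v) \<and> some_nontriv v \<noteq> \<one>\<^bsub>G v\<^esub>"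
    unfolding some_nontriv_def by (rule someI_ex)
  then show ?thesis using assms(1) by (simp add: nontriv_def)
qed

lemma nontriv_words: "\<forall>x\<in>set h. nontriv x \<Longrightarrow> h \<in> W"
  by (auto simp: gp_words_def nontriv_def)

lemma front_both_ends_adj:
  assumes "distinct (map fst h)" "front v h" "front v (rev h)" "u \<in> verts h" "u \<noteq> v"
  shows "E v u"
proof -
  obtain p g q where pq: "h = p @ (v, g) # q" "adj_all v p" using front_split[OF assms(2)] by blast
  have "v \<notin> verts q" using assms(1) pq(1) by auto
  then have "\<not> front v (rev q)" using front_verts by fastforce
  moreover have "front v (rev q @ (v, g) # rev p)" using assms(3) pq(1) by simp
  ultimately have "adj_all v q" by (simp add: front_append)
  then show ?thesis using pq assms(4,5) by (auto simp: adj_all_def)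
qed

context
  fixes L :: "'v set"
  assumes L_sub: "L \<subseteq> V" and L_irr: "irreducible_sub E L" and L_card: "2 \<le> card L"
    and L_nontriv: "\<forall>v\<in>L. carrier (G v) \<noteq> {\<one>\<^bsub>G v\<^esub>}"
begin

lemma finite_L: "finite L"
  using L_card card.infinite by fastforce

lemma non_neighbour:
  assumes v: "v \<in> L"
  shows "\<exists>w\<in>L. w \<noteq> v \<and> \<not> E v w"
proof -
  have "L - {v} \<noteq> {}"
  proof
    assume "L - {v} = {}"
    then have "card L \<le> card {v}" by (intro card_mono) auto
    then show False using L_card by simp
  qed
  then show ?thesis using irreducible_sub_not_join[OF L_irr, of "{v}"] v by blast
qed

lemma letters_cyclically_reduced:
  assumes vs: "distinct vs" "set vs = L"
  shows "cyclically_reduced (letters vs)"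
proof -
  have "\<forall>x\<in>set (letters vs). nontriv x"
    using vs L_sub L_nontriv nontriv_some_nontriv by (auto simp: letters_def)
  then have "reduced (letters vs)" using reduced_distinct vs by simp
  moreover have "\<not> front v (letters vs)" if "front v (rev (letters vs))" for v
  proof
    assume v: "front v (letters vs)"
    then have "v \<in> L" using front_verts[OF v] vs by simp
    then obtain w where "w \<in> L" "w \<noteq> v" "\<not> E v w" using non_neighbour by blast
    then show False using front_both_ends_adj[OF _ v that, of w] vs by simp
  qed
  ultimately show ?thesis by (simp add: cyclically_reduced_def)
qed

lemma commutes_with_powers_letters:
  assumes "commutes_with_powers z L" "set vs = L"
  obtains M where "M \<ge> 1" "eqw (z @ word_pow (letters vs) M) (word_pow (letters vs) M @ z)"
proof -
  have "\<forall>x\<in>set (letters vs). nontriv x"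
    using assms(2) L_sub L_nontriv nontriv_some_nontriv by (auto simp: letters_def)
  then have "letters vs \<in> W" by (rule nontriv_words)
  moreover have "verts (letters vs) \<subseteq> L" using assms(2) by simp
  ultimately show ?thesis using assms(1) that unfolding commutes_with_powers_def by blast
qed

lemma not_front_letters:
  assumes as: "set as = L - S - {f}" and bs: "set bs = S - {f}" and f: "f \<in> L"
    and far: "\<forall>l\<in>S - {f}. \<exists>u\<in>L - S - {f}. \<not> E l u" and v: "v \<in> S"
  shows "\<not> front v (letters (as @ bs @ [f]))"
proof
  assume front: "front v (letters (as @ bs @ [f]))"
  have "v \<notin> set as" using as v by auto
  then have "\<not> front v (letters as)" using front_verts[of v "letters as"] by auto
  then have adj_as: "adj_all v (letters as)" and rest: "front v (letters bs @ [(f, some_nontriv f)])"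
    using front by (simp_all add: front_append)
  show False
  proof (cases "v = f")
    case True
    obtain w where w: "w \<in> L" "w \<noteq> f" "\<not> E f w" using non_neighbour[OF f] by blast
    have "f \<notin> set bs" using bs by auto
    then have "\<not> front f (letters bs)" using front_verts[of f "letters bs"] by auto
    then have "adj_all f (letters bs)" using rest True by (simp add: front_append)
    then show False using w as bs adj_as True by (auto simp: adj_all_def)
  next
    case False
    then obtain u where "u \<in> L - S - {f}" "\<not> E v u" using far v by blast
    then show False using adj_as as by (auto simp: adj_all_def)
  qed
qed

text \<open>\<open>F\<close> and \<open>Lz\<close> play the roles of the first and last vertices of a reduced word.\<close>
lemma two_vertex_block:
  assumes FL: "F \<subseteq> L" and LzL: "Lz \<subseteq> L"
    and F_clique: "\<forall>a\<in>F. \<forall>b\<in>F. a \<noteq> b \<longrightarrow> E a b" and Lz_clique: "\<forall>a\<in>Lz. \<forall>b\<in>Lz. a \<noteq> b \<longrightarrow> E a b"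
    and c: "c \<in> F"
    and F_Lz: "\<forall>f\<in>F. \<exists>l\<in>Lz - {f}. \<forall>u\<in>L - Lz - {f}. E l u"
    and Lz_F: "\<forall>l\<in>Lz. \<exists>f\<in>F - {l}. \<forall>u\<in>L - F - {l}. E f u"
  shows "\<exists>l. L = {c, l} \<and> c \<noteq> l \<and> \<not> E c l \<and> l \<notin> F \<and> c \<notin> Lz"
proof -
  obtain l where l: "l \<in> Lz" "l \<noteq> c" "\<forall>u\<in>L - Lz - {c}. E l u" using F_Lz c by blast
  have lL: "l \<in> L" and cL: "c \<in> L" using l(1) LzL c FL by auto
  have l_adj: "E l u" if "u \<in> L" "u \<noteq> l" "u \<noteq> c" for u
    using that l Lz_clique by (cases "u \<in> Lz") auto
  have nlc: "\<not> E l c"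
  proof
    assume "E l c"
    obtain w where "w \<in> L" "w \<noteq> l" "\<not> E l w" using non_neighbour[OF lL] by blast
    then show False using l_adj \<open>E l c\<close> by (cases "w = c") auto
  qed
  obtain f where f: "f \<in> F" "f \<noteq> l" "\<forall>u\<in>L - F - {l}. E f u" using Lz_F l(1) by blast
  have fL: "f \<in> L" using f FL by auto
  have f_adj: "E f u" if "u \<in> L" "u \<noteq> f" "u \<noteq> l" for u
    using that f F_clique by (cases "u \<in> F") auto
  have fc: "f = c"
  proof (rule ccontr)
    assume "f \<noteq> c"
    then have "E l f" using l_adj fL f(2) by auto
    obtain w where w: "w \<in> L" "w \<noteq> f" "\<not> E f w" using non_neighbour[OF fL] by blast
    then have "w = l" using f_adj by blast
    then show False using \<open>E l f\<close> w(3) adj_sym by blast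
  qed
  have "L = {c, l}"
  proof (rule ccontr)
    assume "L \<noteq> {c, l}"
    then have "L - {c, l} \<noteq> {}" using cL lL by auto
    then obtain a b where "a \<in> {c, l}" "b \<in> L - {c, l}" "\<not> E a b"
      using irreducible_sub_not_join[OF L_irr, of "{c, l}"] cL lL by blast
    then show False using l_adj f_adj fc by auto
  qed
  moreover have "l \<notin> F" using F_clique c l(2) nlc adj_sym by blast
  moreover have "c \<notin> Lz" using Lz_clique l(1,2) nlc by blast
  ultimately show ?thesis using l(2) nlc adj_sym by blast
qed

lemma nontriv_pair_avoiding:
  assumes L: "L = {c, l}" "c \<noteq> l"
    and big: "\<exists>v\<in>L. \<exists>x\<in>carrier (G v). \<exists>y\<in>carrier (G v). x \<noteq> \<one>\<^bsub>G v\<^esub> \<and> y \<noteq> \<one>\<^bsub>G v\<^esub> \<and> x \<noteq> y"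
  obtains x y where "nontriv (c, x)" "nontriv (l, y)" "(x, y) \<noteq> (k, k')"
proof -
  have cl: "c \<in> V" "l \<in> V" using L L_sub by auto
  obtain v a b where v: "v \<in> L" "a \<in> carrier (G v)" "b \<in> carrier (G v)"
      "a \<noteq> \<one>\<^bsub>G v\<^esub>" "b \<noteq> \<one>\<^bsub>G v\<^esub>" "a \<noteq> b"
    using big by blast
  have nt: "nontriv (c, some_nontriv c)" "nontriv (l, some_nontriv l)"
    using nontriv_some_nontriv cl L(1) L_nontriv by auto
  show ?thesis
  proof (cases "v = c")
    case True
    define x where "x = (if a = k then b else a)"
    have "nontriv (c, x)" "x \<noteq> k" using v True cl by (auto simp: x_def nontriv_def)
    then show ?thesis using that[of x "some_nontriv l"] nt by simp
  next
    case False
    then have "v = l" using v(1) L(1) by auto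
    define y where "y = (if a = k' then b else a)"
    have "nontriv (l, y)" "y \<noteq> k'" using v \<open>v = l\<close> cl by (auto simp: y_def nontriv_def)
    then show ?thesis using that[of "some_nontriv c" y] nt by simp
  qed
qed

context
  fixes z assumes z: "reduced z" "verts z \<subseteq> L" "commutes_with_powers z L"
begin

lemma first_vertex_has_last_neighbour:
  assumes f: "front f z"
  shows "\<exists>l. front l (rev z) \<and> l \<noteq> f \<and> (\<forall>u\<in>L - {v. front v (rev z)} - {f}. E l u)"
proof (rule ccontr)
  let ?Lz = "{v. front v (rev z)}"
  assume "\<not> ?thesis"
  then have far: "\<forall>l\<in>?Lz - {f}. \<exists>u\<in>L - ?Lz - {f}. \<not> E l u" by blast
  have fL: "f \<in> L" using f front_verts z(2) by blast
  have LzL: "?Lz \<subseteq> L" using front_verts[of _ "rev z"] z(2) by force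
  obtain as where as: "set as = L - ?Lz - {f}" "distinct as"
    using finite_distinct_list[of "L - ?Lz - {f}"] finite_L by auto
  obtain bs where bs: "set bs = ?Lz - {f}" "distinct bs"
    using finite_distinct_list[of "?Lz - {f}"] finite_subset[OF LzL finite_L] by auto
  define h where "h = letters (as @ bs @ [f])"
  have vs: "distinct (as @ bs @ [f])" "set (as @ bs @ [f]) = L" using as bs fL LzL by auto
  obtain M where M: "M \<ge> 1" "eqw (z @ word_pow h M) (word_pow h M @ z)"
    using commutes_with_powers_letters[OF z(3) vs(2)] unfolding h_def by blast
  have "\<forall>v. front v (rev z) \<longrightarrow> \<not> front v h"
    using not_front_letters[OF as(1) bs(1) fL far] by (simp add: h_def)
  moreover have "\<not> (\<forall>v. front v (rev h) \<longrightarrow> \<not> front v z)" using f by (auto simp: h_def)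
  moreover have "cyclically_reduced h" using letters_cyclically_reduced[OF vs] by (simp add: h_def)
  ultimately show False using commute_word_pow_reduced_iff[OF z(1) _ M] by simp
qed

lemma last_vertex_has_first_neighbour:
  assumes l: "front l (rev z)"
  shows "\<exists>f. front f z \<and> f \<noteq> l \<and> (\<forall>u\<in>L - {v. front v z} - {l}. E f u)"
proof (rule ccontr)
  let ?F = "{v. front v z}"
  assume "\<not> ?thesis"
  then have far: "\<forall>f\<in>?F - {l}. \<exists>u\<in>L - ?F - {l}. \<not> E f u" by blast
  have lL: "l \<in> L" using l front_verts z(2) by fastforce
  have FL: "?F \<subseteq> L" using front_verts z(2) by force
  obtain as where as: "set as = L - ?F - {l}" "distinct as"
    using finite_distinct_list[of "L - ?F - {l}"] finite_L by auto
  obtain bs where bs: "set bs = ?F - {l}" "distinct bs"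
    using finite_distinct_list[of "?F - {l}"] finite_subset[OF FL finite_L] by auto
  define h where "h = letters (l # rev bs @ rev as)"
  have vs: "distinct (l # rev bs @ rev as)" "set (l # rev bs @ rev as) = L" using as bs lL FL by auto
  obtain M where M: "M \<ge> 1" "eqw (z @ word_pow h M) (word_pow h M @ z)"
    using commutes_with_powers_letters[OF z(3) vs(2)] unfolding h_def by blast
  have "rev h = letters (as @ bs @ [l])" by (simp add: h_def)
  then have "\<forall>v. front v (rev h) \<longrightarrow> \<not> front v z"
    using not_front_letters[OF as(1) bs(1) lL far] by auto
  moreover have "\<not> (\<forall>v. front v (rev z) \<longrightarrow> \<not> front v h)" using l by (auto simp: h_def)
  moreover have "cyclically_reduced h" using letters_cyclically_reduced[OF vs] by (simp add: h_def)
  ultimately show False using commute_word_pow_reduced_iff[OF z(1) _ M] by simp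
qed


lemma two_vertex_block_contradiction:
  assumes L: "L = {c, l}" "c \<noteq> l" "\<not> E c l"
    and big: "\<exists>v\<in>L. \<exists>x\<in>carrier (G v). \<exists>y\<in>carrier (G v). x \<noteq> \<one>\<^bsub>G v\<^esub> \<and> y \<noteq> \<one>\<^bsub>G v\<^esub> \<and> x \<noteq> y"
    and starts: "z = (c, k) # z'" and c_not_last: "\<not> front c (rev z)" and l_not_first: "\<not> front l z"
  shows False
proof -
  have nlc: "\<not> E l c" using L(3) adj_sym by blast
  have "z' \<noteq> []" using starts c_not_last by auto
  then obtain d k' z'' where z': "z' = (d, k') # z''" by (metis list.exhaust prod.exhaust)
  have "d \<in> L" "d \<noteq> c" using z(1,2) starts z' by auto
  then have d: "d = l" using L(1) by auto
  obtain x y where xy: "nontriv (c, x)" "nontriv (l, y)" "(x, y) \<noteq> (k, k')"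
    using nontriv_pair_avoiding[OF L(1,2) big] by blast
  define h where "h = [(c, x), (l, y)]"
  have "h \<in> W" "verts h \<subseteq> L" using xy L by (auto simp: h_def nontriv_def)
  then obtain M where M: "M \<ge> 1" "eqw (z @ word_pow h M) (word_pow h M @ z)"
    using z(3) unfolding commutes_with_powers_def by blast
  have h: "cyclically_reduced h" using xy L nlc by (auto simp: h_def cyclically_reduced_def)
  have "v = l" if "front v (rev z)" for v
    using that front_verts[of v "rev z"] z(2) L(1) c_not_last by auto
  then have red1: "reduced (z @ word_pow h M)"
    using reduced_append_word_pow[OF z(1) h M(1)] L(2) nlc by (auto simp: h_def)
  have red2: "reduced (word_pow h M @ z)"
    using reduced_word_pow_append[OF z(1) h M(1)] l_not_first L(3) by (auto simp: h_def)
  have "verts (word_pow h M) = {c, l}" using verts_word_pow[OF M(1), of h] by (simp add: h_def)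
  then have "verts (z @ word_pow h M) \<subseteq> {c, l}" using z(2) L(1) by auto
  moreover have "\<not> E a b" if "a \<in> {c, l}" "b \<in> {c, l}" for a b
    using that L(3) nlc adj_irrefl by auto
  ultimately have "\<forall>a\<in>verts (z @ word_pow h M). \<forall>b\<in>verts (z @ word_pow h M). \<not> E a b"
    by blast
  then have "word_pow h M @ z = z @ word_pow h M" by (rule reduced_eqw_independent[OF red1 red2 M(2)])
  moreover obtain M' where "M = Suc M'" using M(1) by (cases M) auto
  ultimately show False using starts z' d xy(3) by (simp add: word_pow_Suc h_def)
qed

lemma irreducible_block_Nil:
  assumes not_Z2_pair: "\<not> (card L = 2 \<and> (\<forall>v\<in>L. is_Z2 (G v)))"
  shows "z = []"
proof (rule ccontr)
  let ?F = "{v. front v z}" and ?Lz = "{v. front v (rev z)}"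
  assume "z \<noteq> []"
  then obtain c k z' where zc: "z = (c, k) # z'" by (metis list.exhaust prod.exhaust)
  have FL: "?F \<subseteq> L" and LzL: "?Lz \<subseteq> L"
    using front_verts[of _ z] front_verts[of _ "rev z"] z(2) by auto
  have F_clique: "\<forall>a\<in>?F. \<forall>b\<in>?F. a \<noteq> b \<longrightarrow> E a b"
    and Lz_clique: "\<forall>a\<in>?Lz. \<forall>b\<in>?Lz. a \<noteq> b \<longrightarrow> E a b"
    by (auto intro: front_clique)
  have F_Lz: "\<forall>f\<in>?F. \<exists>l\<in>?Lz - {f}. \<forall>u\<in>L - ?Lz - {f}. E l u"
  proof
    fix f assume "f \<in> ?F"
    then obtain l where "front l (rev z)" "l \<noteq> f" "\<forall>u\<in>L - ?Lz - {f}. E l u"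
      using first_vertex_has_last_neighbour by blast
    then show "\<exists>l\<in>?Lz - {f}. \<forall>u\<in>L - ?Lz - {f}. E l u" by blast
  qed
  have Lz_F: "\<forall>l\<in>?Lz. \<exists>f\<in>?F - {l}. \<forall>u\<in>L - ?F - {l}. E f u"
  proof
    fix l assume "l \<in> ?Lz"
    then obtain f where "front f z" "f \<noteq> l" "\<forall>u\<in>L - ?F - {l}. E f u"
      using last_vertex_has_first_neighbour by blast
    then show "\<exists>f\<in>?F - {l}. \<forall>u\<in>L - ?F - {l}. E f u" by blast
  qed
  have "c \<in> ?F" using zc by simp
  from two_vertex_block[OF FL LzL F_clique Lz_clique this F_Lz Lz_F]
  obtain l where l: "L = {c, l}" "c \<noteq> l" "\<not> E c l" "\<not> front l z" "\<not> front c (rev z)"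
    by blast
  then obtain v where v: "v \<in> L" "\<not> is_Z2 (G v)" using not_Z2_pair by auto
  have "v \<in> V" "carrier (G v) \<noteq> {\<one>\<^bsub>G v\<^esub>}" using v(1) L_sub L_nontriv by auto
  then have "\<exists>x\<in>carrier (G v). \<exists>y\<in>carrier (G v). x \<noteq> \<one>\<^bsub>G v\<^esub> \<and> y \<noteq> \<one>\<^bsub>G v\<^esub> \<and> x \<noteq> y"
    using not_is_Z2_two_nontriv[OF vertex_group] v(2) by blast
  then show False using two_vertex_block_contradiction[OF l(1-3) _ zc l(5,4)] v(1) by blast
qed

end

end

subsection \<open>Restrictions to vertex sets and vertex projections\<close>

definition restrict_word :: "'v set \<Rightarrow> ('v \<times> 'g) list \<Rightarrow> ('v \<times> 'g) list" where
  "restrict_word S w = filter (\<lambda>x. fst x \<in> S) w"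

lemma restrict_word_simps [simp]:
  "restrict_word S [] = []"
  "restrict_word S (xs @ ys) = restrict_word S xs @ restrict_word S ys"
  "restrict_word S ((v, g) # xs) = (if v \<in> S then (v, g) # restrict_word S xs else restrict_word S xs)"
  by (auto simp: restrict_word_def)

lemma restrict_word_words: "w \<in> W \<Longrightarrow> restrict_word S w \<in> W"
  by (auto simp: restrict_word_def gp_words_def)

lemma restrict_word_id: "verts w \<subseteq> S \<Longrightarrow> restrict_word S w = w"
  by (auto simp: restrict_word_def intro!: filter_True)

lemma verts_restrict_word: "verts (restrict_word S w) \<subseteq> S \<inter> verts w"
  by (auto simp: restrict_word_def)

lemma exists_reduced_restrict_word:
  assumes "w \<in> W"
  obtains r where "reduced r" "eqw (restrict_word S w) r" "verts r \<subseteq> S"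
proof -
  obtain r where r: "reduced r" "eqw (restrict_word S w) r" "verts r \<subseteq> verts (restrict_word S w)"
    using exists_reduced[OF restrict_word_words[OF assms]] by blast
  moreover have "verts r \<subseteq> S" using r(3) verts_restrict_word[of S w] by blast
  ultimately show ?thesis using that by blast
qed

lemma eqw_restrict_word: "eqw w w' \<Longrightarrow> eqw (restrict_word S w) (restrict_word S w')"
proof (induction rule: gp_eq.induct)
  case (gp_refl w) then show ?case by (simp add: gp_eq.gp_refl restrict_word_words)
next
  case (gp_sym w w') show ?case by (rule gp_eq.gp_sym[OF gp_sym.IH])
next
  case (gp_trans w w' w'') show ?case by (rule gp_eq.gp_trans[OF gp_trans.IH])
next
  case (gp_unit xs ys v)
  then show ?case
    using eqw_context[OF eqw_unit_letter, of v "restrict_word S xs" "restrict_word S ys"]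
    by (simp add: gp_eq.gp_refl restrict_word_words)
next
  case (gp_merge xs ys v g h)
  then show ?case
    using eqw_context[OF eqw_merge_letters, of v g h "restrict_word S xs" "restrict_word S ys"]
    by (simp add: gp_eq.gp_refl restrict_word_words mult_in_vertex_group)
next
  case (gp_comm xs ys u v g h)
  then show ?case
    using eqw_context[OF eqw_comm_letters, of u v g h "restrict_word S xs" "restrict_word S ys"]
    by (auto simp: gp_eq.gp_refl restrict_word_words)
qed

lemma eqw_restrict_word_join:
  assumes "A \<inter> C = {}" "\<forall>a\<in>A. \<forall>c\<in>C. E a c" "w \<in> W"
  shows "eqw (restrict_word (A \<union> C) w) (restrict_word A w @ restrict_word C w)"
  using assms(3)
proof (induction w)
  case Nil then show ?case by (simp add: gp_refl)
next
  case (Cons x w)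
  obtain v g where x: "x = (v, g)" by (cases x)
  have v: "v \<in> V" "g \<in> carrier (G v)" and w: "w \<in> W" using Cons.prems x by auto
  have rA: "restrict_word A w \<in> W" and rC: "restrict_word C w \<in> W"
    using restrict_word_words[OF w] by auto
  have IH: "eqw ((v, g) # restrict_word (A \<union> C) w) ((v, g) # restrict_word A w @ restrict_word C w)"
    using eqw_context[OF Cons.IH[OF w], of "[(v, g)]" "[]"] v by simp
  consider "v \<in> A" | "v \<in> C" | "v \<notin> A" "v \<notin> C" by blast
  then show ?case
  proof cases
    case 1
    then have "v \<notin> C" using assms(1) by blast
    then show ?thesis using IH 1 x by simp
  next
    case 2
    then have "v \<notin> A" using assms(1) by blast
    have "adj_all v (restrict_word A w)"
      using assms(2) 2 adj_sym by (auto simp: adj_all_def restrict_word_def)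
    then have "eqw ((v, g) # restrict_word A w) (restrict_word A w @ [(v, g)])"
      using gp_sym[OF eqw_move_front] rA v by blast
    from eqw_append[OF this gp_refl[OF rC]]
    have "eqw ((v, g) # restrict_word A w @ restrict_word C w) (restrict_word A w @ (v, g) # restrict_word C w)"
      by simp
    then show ?thesis using gp_trans[OF IH] 2 \<open>v \<notin> A\<close> x by simp
  next
    case 3 then show ?thesis using Cons.IH w x by simp
  qed
qed

definition vertex_prod :: "'v \<Rightarrow> ('v \<times> 'g) list \<Rightarrow> 'g" where
  "vertex_prod u w = foldr (\<lambda>x acc. if fst x = u then snd x \<otimes>\<^bsub>G u\<^esub> acc else acc) w \<one>\<^bsub>G u\<^esub>"

lemma vertex_prod_simps [simp]:
  "vertex_prod u [] = \<one>\<^bsub>G u\<^esub>"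
  "vertex_prod u ((v, g) # w) = (if v = u then g \<otimes>\<^bsub>G u\<^esub> vertex_prod u w else vertex_prod u w)"
  by (auto simp: vertex_prod_def)

lemma vertex_prod_restrict_word: "u \<in> S \<Longrightarrow> vertex_prod u (restrict_word S w) = vertex_prod u w"
proof (induction w)
  case (Cons x w) then show ?case by (cases x) auto
qed simp

context
  fixes u assumes u: "u \<in> V"
begin

interpretation Gu: group "G u" using vertex_group u by blast

lemma vertex_prod_carrier: "w \<in> W \<Longrightarrow> vertex_prod u w \<in> carrier (G u)"
proof (induction w)
  case (Cons x w) then show ?case by (cases x) auto
qed simp

lemma vertex_prod_append:
  "xs \<in> W \<Longrightarrow> ys \<in> W \<Longrightarrow> vertex_prod u (xs @ ys) = vertex_prod u xs \<otimes>\<^bsub>G u\<^esub> vertex_prod u ys"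
proof (induction xs)
  case Nil then show ?case using vertex_prod_carrier by simp
next
  case (Cons x xs)
  then show ?case using vertex_prod_carrier by (cases x) (auto simp: Gu.m_assoc)
qed

lemma eqw_vertex_prod: "eqw w w' \<Longrightarrow> vertex_prod u w = vertex_prod u w'"
proof (induction rule: gp_eq.induct)
  case (gp_unit xs ys v)
  then show ?case
    using vertex_prod_carrier one_in_vertex_group by (simp add: vertex_prod_append)
next
  case (gp_merge xs ys v g h)
  then show ?case
    using vertex_prod_carrier mult_in_vertex_group
    by (cases "v = u") (simp_all add: vertex_prod_append Gu.m_assoc)
next
  case (gp_comm xs ys a b g h)
  then have "a \<noteq> b" using adj_irrefl by auto
  with gp_comm show ?case using vertex_prod_carrier adj_in_V
    by (auto simp: vertex_prod_append Gu.m_assoc)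
qed auto

lemma eqw_single_vertex: "w \<in> W \<Longrightarrow> verts w \<subseteq> {u} \<Longrightarrow> eqw w [(u, vertex_prod u w)]"
proof (induction w)
  case Nil then show ?case using gp_sym[OF eqw_unit_letter[OF u]] by simp
next
  case (Cons x w)
  obtain g where x: "x = (u, g)" using Cons.prems by (cases x) auto
  have w: "w \<in> W" "verts w \<subseteq> {u}" and g: "g \<in> carrier (G u)" using Cons.prems x by auto
  have "eqw ([(u, g)] @ w @ []) ([(u, g)] @ [(u, vertex_prod u w)] @ [])"
    by (rule eqw_context[OF Cons.IH[OF w]]) (use u g in auto)
  also have "eqw \<dots> [(u, g \<otimes>\<^bsub>G u\<^esub> vertex_prod u w)]"
    using eqw_merge_letters[OF u g vertex_prod_carrier[OF w(1)]] by simp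
  finally show ?case using x by simp
qed

lemma eqw_cone_vertex_split:
  assumes cone: "\<forall>v\<in>V - {u}. E u v" and h: "h \<in> W"
  shows "eqw h ([(u, vertex_prod u h)] @ restrict_word (V - {u}) h)"
proof -
  have "verts h \<subseteq> {u} \<union> (V - {u})" using words_verts[OF h] by auto
  then have "eqw h (restrict_word {u} h @ restrict_word (V - {u}) h)"
    using eqw_restrict_word_join[of "{u}" "V - {u}" h] cone h restrict_word_id by fastforce
  moreover have "eqw (restrict_word {u} h) [(u, vertex_prod u (restrict_word {u} h))]"
    using eqw_single_vertex[OF restrict_word_words[OF h]] verts_restrict_word[of "{u}" h] by blast
  then have "eqw (restrict_word {u} h) [(u, vertex_prod u h)]"
    using vertex_prod_restrict_word[of u "{u}" h] by simp
  ultimately show ?thesis using eqw_append gp_refl restrict_word_words[OF h] by (blast intro: gp_trans)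
qed

lemma eqw_cone_vertex_commute:
  assumes cone: "\<forall>v\<in>V - {u}. E u v" and h: "h \<in> W" and p: "p \<in> carrier (G u)"
    and pq: "p \<otimes>\<^bsub>G u\<^esub> vertex_prod u h = vertex_prod u h \<otimes>\<^bsub>G u\<^esub> p"
  shows "eqw ([(u, p)] @ h) (h @ [(u, p)])"
proof -
  define q where "q = vertex_prod u h"
  define R where "R = restrict_word (V - {u}) h"
  have q: "q \<in> carrier (G u)" and R: "R \<in> W"
    using vertex_prod_carrier[OF h] restrict_word_words[OF h] by (simp_all add: q_def R_def)
  have split: "eqw h ([(u, q)] @ R)" using eqw_cone_vertex_split[OF cone h] by (simp add: q_def R_def)
  have "adj_all u R" using cone verts_restrict_word[of "V - {u}" h] by (auto simp: adj_all_def R_def)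
  then have moveR: "eqw ((u, p) # R) (R @ [(u, p)])" using gp_sym[OF eqw_move_front] R u p by blast
  have "eqw ([(u, p)] @ h) ([(u, p), (u, q)] @ R)"
    using eqw_context[OF split, of "[(u, p)]" "[]"] u p by simp
  also have "eqw \<dots> ([(u, q \<otimes>\<^bsub>G u\<^esub> p)] @ R)"
    using eqw_append[OF eqw_merge_letters[OF u p q] gp_refl[OF R]] pq by (simp add: q_def)
  also have "eqw \<dots> ([(u, q), (u, p)] @ R)"
    using eqw_append[OF gp_sym[OF eqw_merge_letters[OF u q p]] gp_refl[OF R]] .
  also have "eqw \<dots> ([(u, q)] @ R @ [(u, p)])"
    using eqw_context[OF moveR, of "[(u, q)]" "[]"] u q by simp
  also have "eqw \<dots> (h @ [(u, p)])"
    using eqw_append[OF gp_sym[OF split] gp_refl, of "[(u, p)]"] u p by simp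
  finally show ?thesis .
qed

end

lemma class_lift_cls:
  assumes "\<And>w w'. eqw w w' \<Longrightarrow> f w = f w'" "w \<in> W"
  shows "class_lift f (cls w) = f w"
proof -
  have "(SOME w'. w' \<in> cls w) \<in> cls w" using cls_mem[OF assms(2)] by (rule someI)
  then show ?thesis using assms(1) by (simp add: class_lift_def gp_class_def gp_sym)
qed

lemma hom_class_lift:
  assumes respects: "\<And>w w'. eqw w w' \<Longrightarrow> f w = f w'"
    and closed: "\<And>w. w \<in> W \<Longrightarrow> f w \<in> carrier H"
    and mult: "\<And>a b. a \<in> W \<Longrightarrow> b \<in> W \<Longrightarrow> f (a @ b) = f a \<otimes>\<^bsub>H\<^esub> f b"
  shows "class_lift f \<in> hom GP H"
  by (rule homI) (auto simp: GP_carrier GP_mult class_lift_cls[OF respects] closed mult)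

definition vertex_proj :: "'v \<Rightarrow> ('v \<times> 'g) list set \<Rightarrow> 'g" where
  "vertex_proj u = class_lift (vertex_prod u)"

lemma vertex_proj_cls: "u \<in> V \<Longrightarrow> w \<in> W \<Longrightarrow> vertex_proj u (cls w) = vertex_prod u w"
  unfolding vertex_proj_def by (rule class_lift_cls[of "vertex_prod u", OF eqw_vertex_prod])

lemma group_hom_vertex_proj:
  assumes u: "u \<in> V"
  shows "group_hom GP (G u) (vertex_proj u)"
proof -
  have "vertex_proj u \<in> hom GP (G u)" unfolding vertex_proj_def
    by (rule hom_class_lift[of "vertex_prod u", OF eqw_vertex_prod[OF u] vertex_prod_carrier[OF u] vertex_prod_append[OF u]])
  then show ?thesis using group_GP vertex_group[OF u] by (simp add: group_hom_def group_hom_axioms_def)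
qed

lemma vertex_proj_surj: "u \<in> V \<Longrightarrow> vertex_proj u ` carrier GP = carrier (G u)"
proof
  assume u: "u \<in> V"
  show "vertex_proj u ` carrier GP \<subseteq> carrier (G u)"
    using group_hom.hom_closed[OF group_hom_vertex_proj[OF u]] by blast
  show "carrier (G u) \<subseteq> vertex_proj u ` carrier GP"
  proof
    fix g assume g: "g \<in> carrier (G u)"
    then have "vertex_proj u (cls [(u, g)]) = g"
      using u by (simp add: vertex_proj_cls group.is_monoid[OF vertex_group] monoid.r_one)
    then show "g \<in> vertex_proj u ` carrier GP" using cls_in_GP[of "[(u, g)]"] u g by force
  qed
qed

subsection \<open>Pairs of non-adjacent vertices\<close>

definition nontriv_count :: "'v set \<Rightarrow> ('v \<times> 'g) list \<Rightarrow> nat" where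
  "nontriv_count S w = length (filter (\<lambda>(v, g). v \<in> S \<and> g \<noteq> \<one>\<^bsub>G v\<^esub>) w)"

lemma nontriv_count_simps [simp]:
  "nontriv_count S [] = 0"
  "nontriv_count S (xs @ ys) = nontriv_count S xs + nontriv_count S ys"
  "nontriv_count S ((v, g) # xs) = (if v \<in> S \<and> g \<noteq> \<one>\<^bsub>G v\<^esub> then 1 else 0) + nontriv_count S xs"
  by (simp_all add: nontriv_count_def)

lemma nontriv_count_restrict_word: "nontriv_count S (restrict_word S w) = nontriv_count S w"
proof (induction w)
  case (Cons x w) then show ?case by (cases x) auto
qed simp

text \<open>In \<open>\<int>/2\<close> a product is non-trivial iff exactly one factor is, so the parity of the number of
  non-trivial letters at \<open>\<int>/2\<close> vertices is an invariant.\<close>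
lemma even_nontriv_count_eqw:
  assumes Z2: "\<forall>v\<in>S. is_Z2 (G v)"
  shows "eqw w w' \<Longrightarrow> even (nontriv_count S w) \<longleftrightarrow> even (nontriv_count S w')"
proof (induction rule: gp_eq.induct)
  case (gp_merge xs ys v g h)
  show ?case
  proof (cases "v \<in> S")
    case True
    then obtain c where c: "carrier (G v) = {\<one>\<^bsub>G v\<^esub>, c}" "c \<noteq> \<one>\<^bsub>G v\<^esub>"
      using Z2 is_Z2_iff[OF vertex_group[OF gp_merge(3)]] by blast
    have "c \<otimes>\<^bsub>G v\<^esub> c = \<one>\<^bsub>G v\<^esub>" using Z2_square[OF vertex_group[OF gp_merge(3)] c] .
    then have "g \<otimes>\<^bsub>G v\<^esub> h \<noteq> \<one>\<^bsub>G v\<^esub> \<longleftrightarrow> (g \<noteq> \<one>\<^bsub>G v\<^esub>) \<noteq> (h \<noteq> \<one>\<^bsub>G v\<^esub>)"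
      using gp_merge(4,5) c vertex_group[OF gp_merge(3)] by (auto simp: group.is_monoid)
    then show ?thesis using True by auto
  qed simp
qed auto

lemma nontriv_count_mod_eqw:
  "\<forall>v\<in>S. is_Z2 (G v) \<Longrightarrow> eqw w w' \<Longrightarrow> int (nontriv_count S w mod 2) = int (nontriv_count S w' mod 2)"
  using even_nontriv_count_eqw by (simp add: mod2_eq_if)

definition nontriv_parity :: "'v set \<Rightarrow> ('v \<times> 'g) list set \<Rightarrow> int" where
  "nontriv_parity S = class_lift (\<lambda>w. int (nontriv_count S w mod 2))"

lemma hom_nontriv_parity:
  assumes Z2: "\<forall>v\<in>S. is_Z2 (G v)"
  shows "nontriv_parity S \<in> hom GP (integer_mod_group 2)"
  unfolding nontriv_parity_def
  by (rule hom_class_lift[OF nontriv_count_mod_eqw[OF Z2]])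
    (auto simp: carrier_integer_mod_group mod_add_eq zmod_int)

lemma nontriv_parity_cls:
  "\<forall>v\<in>S. is_Z2 (G v) \<Longrightarrow> w \<in> W \<Longrightarrow> nontriv_parity S (cls w) = int (nontriv_count S w mod 2)"
  unfolding nontriv_parity_def by (rule class_lift_cls[OF nontriv_count_mod_eqw])

context
  fixes a b assumes ab: "a \<noteq> b" "\<not> E a b"
begin

lemma front_two_vertices:
  assumes "verts ((c, k) # w) \<subseteq> {a, b}"
  shows "front v ((c, k) # w) \<longleftrightarrow> v = c"
proof -
  have "\<not> E x y" if "x \<in> {a, b}" "y \<in> {a, b}" for x y
    using that ab adj_irrefl adj_sym by auto
  then show ?thesis using front_verts[of v w] assms by auto
qed

lemma last_two_vertices:
  "reduced ((c, k) # w) \<Longrightarrow> verts ((c, k) # w) \<subseteq> {a, b} \<Longrightarrow>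
    fst (last ((c, k) # w)) = c \<longleftrightarrow> odd (length ((c, k) # w))"
proof (induction w arbitrary: c k)
  case (Cons y w)
  obtain c' k' where y: "y = (c', k')" by (cases y)
  have r: "reduced ((c', k') # w)" "verts ((c', k') # w) \<subseteq> {a, b}" using Cons.prems y by auto
  have "c' \<noteq> c" "c \<in> {a, b}" "c' \<in> {a, b}" using Cons.prems y by auto
  moreover have "fst (last ((c', k') # w)) \<in> {a, b}"
    using last_in_set[of "(c', k') # w"] r(2) by force
  ultimately have "fst (last ((c, k) # (c', k') # w)) = c \<longleftrightarrow> fst (last ((c', k') # w)) \<noteq> c'"
    by auto
  then show ?case using Cons.IH[OF r] y by simp
qed simp

lemma commutes_with_powers_even_length:
  assumes na: "nontriv (a, \<alpha>)" and nb: "nontriv (b, \<beta>)" and r: "reduced r" "verts r \<subseteq> {a, b}"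
    and comm: "commutes_with_powers r {a, b}"
  shows "even (length r)"
proof (rule ccontr)
  assume odd: "odd (length r)"
  define h where "h = [(a, \<alpha>), (b, \<beta>)]"
  have "h \<in> W" "verts h \<subseteq> {a, b}" using na nb by (auto simp: h_def nontriv_def)
  then obtain M where M: "M \<ge> 1" "eqw (r @ word_pow h M) (word_pow h M @ r)"
    using comm unfolding commutes_with_powers_def by blast
  obtain c k r' where rc: "r = (c, k) # r'" using odd by (cases r) auto
  have c: "c \<in> {a, b}" using r(2) rc by auto
  have "fst (last r) = c" using last_two_vertices r rc odd by simp
  moreover have "rev r = last r # rev (butlast r)"
    using rc by (metis list.distinct(1) rev.simps(2) append_butlast_last_id rev_rev_ident)
  ultimately have rr: "rev r = (c, snd (last r)) # rev (butlast r)" by (metis prod.collapse)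
  have "set ((c, snd (last r)) # rev (butlast r)) = set r" by (simp only: rr[symmetric] set_rev)
  then have "verts ((c, snd (last r)) # rev (butlast r)) \<subseteq> {a, b}" using r(2) by (simp only:)
  then have "front v (rev r) \<longleftrightarrow> v = c" for v unfolding rr by (rule front_two_vertices)
  moreover have "front v r \<longleftrightarrow> v = c" for v using front_two_vertices r(2) rc by simp
  moreover have "cyclically_reduced h" using na nb ab adj_sym by (auto simp: h_def cyclically_reduced_def)
  moreover have "front v h \<longleftrightarrow> v = a" "front v (rev h) \<longleftrightarrow> v = b" for v
    using ab adj_sym by (auto simp: h_def)
  ultimately show False using commute_word_pow_reduced_iff[OF r(1) _ M] c ab(1) by auto
qed

lemma reduced_even_length_generate:
  assumes ca: "carrier (G a) = {\<one>\<^bsub>G a\<^esub>, \<alpha>}" and cb: "carrier (G b) = {\<one>\<^bsub>G b\<^esub>, \<beta>}"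
  shows "reduced r \<Longrightarrow> verts r \<subseteq> {a, b} \<Longrightarrow> even (length r) \<Longrightarrow>
    cls r \<in> generate GP {cls [(a, \<alpha>), (b, \<beta>)], cls [(b, \<beta>), (a, \<alpha>)]}"
proof (induction "length r" arbitrary: r rule: less_induct)
  case less
  show ?case
  proof (cases r)
    case Nil then show ?thesis using generate.one GP_one by metis
  next
    case (Cons x r1)
    then obtain c k c' k' r'' where rr: "r = (c, k) # (c', k') # r''"
      using less.prems(3) by (cases r1) (auto, metis prod.exhaust)
    have nt: "nontriv (c, k)" "nontriv (c', k')" and cc: "c' \<noteq> c" using less.prems(1) rr by auto
    have r'': "reduced r''" "verts r'' \<subseteq> {a, b}" "even (length r'')" using less.prems rr by auto
    have cin: "c \<in> {a, b}" "c' \<in> {a, b}" using less.prems(2) rr by auto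
    have "[(c, k), (c', k')] = [(a, \<alpha>), (b, \<beta>)] \<or> [(c, k), (c', k')] = [(b, \<beta>), (a, \<alpha>)]"
      using nt cc cin ca cb by (auto simp: nontriv_def)
    then have "cls [(c, k), (c', k')] \<in> generate GP {cls [(a, \<alpha>), (b, \<beta>)], cls [(b, \<beta>), (a, \<alpha>)]}"
      by (auto intro: generate.incl)
    moreover have "cls r'' \<in> generate GP {cls [(a, \<alpha>), (b, \<beta>)], cls [(b, \<beta>), (a, \<alpha>)]}"
      using less.hyps[OF _ r''] rr by simp
    moreover have "cls r = cls [(c, k), (c', k')] \<otimes>\<^bsub>GP\<^esub> cls r''"
      using nt r'' reduced_words rr by (simp add: GP_mult nontriv_def)
    ultimately show ?thesis by (simp add: generate.eng)
  qed
qed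

end

lemma nontriv_count_reduced: "reduced r \<Longrightarrow> verts r \<subseteq> S \<Longrightarrow> nontriv_count S r = length r"
proof (induction r)
  case (Cons x r) then show ?case by (cases x) (auto simp: nontriv_def)
qed simp

lemma eqw_square_Z2_letter:
  assumes "v \<in> V" "carrier (G v) = {\<one>\<^bsub>G v\<^esub>, c}" "c \<noteq> \<one>\<^bsub>G v\<^esub>"
  shows "eqw [(v, c), (v, c)] []"
proof -
  have "eqw [(v, c), (v, c)] [(v, c \<otimes>\<^bsub>G v\<^esub> c)]" using eqw_merge_letters assms by simp
  also have "eqw \<dots> []" using Z2_square[OF vertex_group assms(2,3)] eqw_unit_letter assms(1) by simp
  finally show ?thesis .
qed

context
  fixes a b x y
  assumes ab: "a \<in> V" "b \<in> V" "a \<noteq> b" "\<not> E a b"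
    and ca: "carrier (G a) = {\<one>\<^bsub>G a\<^esub>, x}" "x \<noteq> \<one>\<^bsub>G a\<^esub>"
    and cb: "carrier (G b) = {\<one>\<^bsub>G b\<^esub>, y}" "y \<noteq> \<one>\<^bsub>G b\<^esub>"
begin

lemma pair_letters_in_carrier: "x \<in> carrier (G a)" "y \<in> carrier (G b)"
  using ca cb by auto

lemma even_nontriv_count_generate:
  assumes Q: "Q \<in> W" "verts Q \<subseteq> {a, b}" "even (nontriv_count {a, b} Q)"
  shows "cls Q \<in> generate GP {cls [(a, x), (b, y)], cls [(b, y), (a, x)]}"
proof -
  have Z2: "\<forall>v\<in>{a, b}. is_Z2 (G v)" using is_Z2_iff vertex_group ab(1,2) ca cb by blast
  obtain r where r: "reduced r" "eqw Q r" "verts r \<subseteq> verts Q" using exists_reduced[OF Q(1)] by blast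
  have "even (length r)"
    using even_nontriv_count_eqw[OF Z2 r(2)] nontriv_count_reduced[OF r(1)] r(3) Q(2,3) by auto
  then have "cls r \<in> generate GP {cls [(a, x), (b, y)], cls [(b, y), (a, x)]}"
    using reduced_even_length_generate[OF ab(3,4) ca(1) cb(1) r(1)] r(3) Q(2) by blast
  moreover have "cls Q = cls r" using cls_eq_iff[OF Q(1)] r(2) by simp
  ultimately show ?thesis by simp
qed

lemma pair_commute_generate:
  assumes "g \<in> generate GP {cls [(a, x), (b, y)], cls [(b, y), (a, x)]}"
  shows "cls [(a, x), (b, y)] \<otimes>\<^bsub>GP\<^esub> g = g \<otimes>\<^bsub>GP\<^esub> cls [(a, x), (b, y)]"
proof (rule GP.commute_generate[OF _ _ _ assms])
  have ab_ba: "eqw ([(a, x), (b, y)] @ [(b, y), (a, x)]) []"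
  proof -
    have "eqw ([(a, x)] @ [(b, y), (b, y)] @ [(a, x)]) ([(a, x)] @ [] @ [(a, x)])"
      using eqw_context[OF eqw_square_Z2_letter[OF ab(2) cb], of "[(a, x)]" "[(a, x)]"]
        ab pair_letters_in_carrier by simp
    also have "eqw \<dots> []" using eqw_square_Z2_letter[OF ab(1) ca] by simp
    finally show ?thesis by simp
  qed
  have ba_ab: "eqw ([(b, y), (a, x)] @ [(a, x), (b, y)]) []"
  proof -
    have "eqw ([(b, y)] @ [(a, x), (a, x)] @ [(b, y)]) ([(b, y)] @ [] @ [(b, y)])"
      using eqw_context[OF eqw_square_Z2_letter[OF ab(1) ca], of "[(b, y)]" "[(b, y)]"]
        ab pair_letters_in_carrier by simp
    also have "eqw \<dots> []" using eqw_square_Z2_letter[OF ab(2) cb] by simp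
    finally show ?thesis by simp
  qed
  have "eqw ([(a, x), (b, y)] @ [(b, y), (a, x)]) ([(b, y), (a, x)] @ [(a, x), (b, y)])"
    using gp_trans[OF ab_ba gp_sym[OF ba_ab]] .
  then show "\<forall>t\<in>{cls [(a, x), (b, y)], cls [(b, y), (a, x)]}.
      cls [(a, x), (b, y)] \<otimes>\<^bsub>GP\<^esub> t = t \<otimes>\<^bsub>GP\<^esub> cls [(a, x), (b, y)]"
    using GP_commute ab ca cb by auto
qed (use ab ca cb cls_in_GP in auto)

lemma pair_commute_even_count:
  assumes cone: "\<forall>v\<in>V - {a, b}. E a v \<and> E b v" and h: "h \<in> W" "even (nontriv_count {a, b} h)"
  shows "cls [(a, x), (b, y)] \<otimes>\<^bsub>GP\<^esub> cls h = cls h \<otimes>\<^bsub>GP\<^esub> cls [(a, x), (b, y)]"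
proof -
  define Q where "Q = restrict_word {a, b} h"
  define R where "R = restrict_word (V - {a, b}) h"
  have QR: "Q \<in> W" "R \<in> W" using restrict_word_words[OF h(1)] by (simp_all add: Q_def R_def)
  have "verts h \<subseteq> {a, b} \<union> (V - {a, b})" using words_verts[OF h(1)] by auto
  then have "eqw h (Q @ R)"
    using eqw_restrict_word_join[of "{a, b}" "V - {a, b}" h] cone h(1) restrict_word_id
    by (fastforce simp: Q_def R_def)
  then have h_QR: "cls h = cls Q \<otimes>\<^bsub>GP\<^esub> cls R" using h cls_eq_iff GP_mult QR by simp
  have "nontriv_count {a, b} Q = nontriv_count {a, b} h"
    by (simp add: Q_def nontriv_count_restrict_word)
  then have "cls Q \<in> generate GP {cls [(a, x), (b, y)], cls [(b, y), (a, x)]}"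
    using even_nontriv_count_generate QR(1) verts_restrict_word[of "{a, b}" h] h(2)
    by (simp add: Q_def)
  then have eQ: "cls [(a, x), (b, y)] \<otimes>\<^bsub>GP\<^esub> cls Q = cls Q \<otimes>\<^bsub>GP\<^esub> cls [(a, x), (b, y)]"
    by (rule pair_commute_generate)
  have "\<forall>v\<in>verts R. E a v \<and> E b v"
    using cone verts_restrict_word[of "V - {a, b}" h] by (auto simp: R_def)
  then have "eqw ([(a, x), (b, y)] @ R) (R @ [(a, x), (b, y)])"
    using ab pair_letters_in_carrier by (intro eqw_append_commute_adj QR(2)) auto
  then have eR: "cls [(a, x), (b, y)] \<otimes>\<^bsub>GP\<^esub> cls R = cls R \<otimes>\<^bsub>GP\<^esub> cls [(a, x), (b, y)]"
    using GP_commute QR(2) ab ca cb by simp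
  show ?thesis using h_QR eQ eR QR cls_in_GP ab ca cb
    by (simp add: GP.m_assoc[symmetric]) (simp add: GP.m_assoc)
qed

text \<open>The centralised subgroup is the kernel of the parity map.\<close>
lemma pair_virtual_centre:
  assumes cone: "\<forall>v\<in>V - {a, b}. E a v \<and> E b v"
  shows "cls [(a, x), (b, y)] \<in> virtual_centre GP"
proof -
  have Z2: "\<forall>v\<in>{a, b}. is_Z2 (G v)" using is_Z2_iff vertex_group ab(1,2) ca cb by blast
  interpret parity: group_hom GP "integer_mod_group 2" "nontriv_parity {a, b}"
    using hom_nontriv_parity[OF Z2] group_GP by (simp add: group_hom_def group_hom_axioms_def)
  let ?K = "carrier GP \<inter> nontriv_parity {a, b} -` {0}"
  have triv: "subgroup {0} (integer_mod_group 2)"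
    using group.triv_subgroup[OF group_integer_mod_group] by simp
  have "finite (rcosets\<^bsub>integer_mod_group 2\<^esub> {0})"
    using group.finite_rcosets_of_finite[OF group_integer_mod_group _ triv]
    by (simp add: carrier_integer_mod_group)
  then have K: "subgroup ?K GP" "finite (rcosets\<^bsub>GP\<^esub> ?K)"
    using parity.subgroup_vimage[OF triv] parity.finite_rcosets_vimage[OF triv] by auto
  have "cls [(a, x), (b, y)] \<otimes>\<^bsub>GP\<^esub> k = k \<otimes>\<^bsub>GP\<^esub> cls [(a, x), (b, y)]" if k: "k \<in> ?K" for k
  proof -
    obtain h where h: "h \<in> W" "k = cls h" using k by (auto simp: GP_carrier)
    then have "even (nontriv_count {a, b} h)"
      using k nontriv_parity_cls[OF Z2 h(1)] by (auto simp: even_iff_mod_2_eq_zero)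
    then show ?thesis using pair_commute_even_count[OF cone h(1)] h(2) by simp
  qed
  then show ?thesis using K cls_in_GP ab ca cb unfolding virtual_centre_def by auto
qed

end

subsection \<open>Elements of the virtual centre\<close>

lemma cone_vertex_virtual_centre:
  assumes u: "u \<in> V" and cone: "\<forall>v\<in>V - {u}. E u v" and p: "p \<in> virtual_centre (G u)"
  shows "cls [(u, p)] \<in> virtual_centre GP"
proof -
  interpret proj: group_hom GP "G u" "vertex_proj u" by (rule group_hom_vertex_proj[OF u])
  obtain Ku where Ku: "p \<in> carrier (G u)" "subgroup Ku (G u)" "finite (rcosets\<^bsub>G u\<^esub> Ku)"
      "\<forall>k\<in>Ku. p \<otimes>\<^bsub>G u\<^esub> k = k \<otimes>\<^bsub>G u\<^esub> p"
    using p unfolding virtual_centre_def by blast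
  have "cls [(u, p)] \<otimes>\<^bsub>GP\<^esub> k = k \<otimes>\<^bsub>GP\<^esub> cls [(u, p)]" if k: "k \<in> carrier GP \<inter> vertex_proj u -` Ku" for k
  proof -
    obtain h where h: "h \<in> W" "k = cls h" using k by (auto simp: GP_carrier)
    then have "vertex_prod u h \<in> Ku" using k vertex_proj_cls[OF u] by auto
    then have "eqw ([(u, p)] @ h) (h @ [(u, p)])"
      using eqw_cone_vertex_commute[OF u cone h(1) Ku(1)] Ku(4) by auto
    then show ?thesis using GP_commute h u Ku(1) by simp
  qed
  moreover have "cls [(u, p)] \<in> carrier GP" using cls_in_GP u Ku(1) by simp
  ultimately show ?thesis
    using proj.subgroup_vimage[OF Ku(2)] proj.finite_rcosets_vimage[OF Ku(2,3)]
    unfolding virtual_centre_def by blast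
qed

lemma virtual_centre_commutes_with_powers:
  assumes w: "w \<in> W" and vz: "cls w \<in> virtual_centre GP"
  shows "commutes_with_powers w V"
  unfolding commutes_with_powers_def
proof (intro ballI impI)
  fix h assume h: "h \<in> W"
  obtain K where K: "subgroup K GP" "finite (rcosets\<^bsub>GP\<^esub> K)" "\<forall>k\<in>K. cls w \<otimes>\<^bsub>GP\<^esub> k = k \<otimes>\<^bsub>GP\<^esub> cls w"
    using vz unfolding virtual_centre_def by blast
  obtain M :: nat where M: "M \<ge> 1" "cls h [^]\<^bsub>GP\<^esub> M \<in> K"
    using GP.finite_rcosets_pow_mem[OF K(1,2) cls_in_GP[OF h]] by blast
  then have "cls w \<otimes>\<^bsub>GP\<^esub> cls (word_pow h M) = cls (word_pow h M) \<otimes>\<^bsub>GP\<^esub> cls w"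
    using K(3) GP_pow[OF h] by metis
  then show "\<exists>M\<ge>1. eqw (w @ word_pow h M) (word_pow h M @ w)"
    using M(1) GP_commute w word_pow_words[OF h] by blast
qed

lemma commutes_with_powers_restrict:
  assumes w: "commutes_with_powers w V" and r: "eqw (restrict_word B w) r"
  shows "commutes_with_powers r B"
  unfolding commutes_with_powers_def
proof (intro ballI impI)
  fix h assume h: "h \<in> W" "verts h \<subseteq> B"
  then obtain M where M: "M \<ge> 1" "eqw (w @ word_pow h M) (word_pow h M @ w)"
    using w words_verts unfolding commutes_with_powers_def by blast
  have hM: "restrict_word B (word_pow h M) = word_pow h M"
    using restrict_word_id verts_word_pow[OF M(1)] h(2) by simp
  have "eqw (r @ word_pow h M) (restrict_word B w @ word_pow h M)"
    using eqw_append[OF gp_sym[OF r] gp_refl[OF word_pow_words[OF h(1)]]] .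
  also have "eqw \<dots> (word_pow h M @ restrict_word B w)"
    using eqw_restrict_word[OF M(2), of B] hM by simp
  also have "eqw \<dots> (word_pow h M @ r)"
    using eqw_append[OF gp_refl[OF word_pow_words[OF h(1)]] r] .
  finally show "\<exists>M\<ge>1. eqw (r @ word_pow h M) (word_pow h M @ r)" using M(1) by blast
qed

end

section \<open>Graph products over a join decomposition\<close>

locale graph_prod_join = graph_prod V E G
  for V :: "'v set" and E :: "'v \<Rightarrow> 'v \<Rightarrow> bool" and G :: "'v \<Rightarrow> 'g monoid" +
  fixes P :: "'v set set"
  assumes join: "join_decomposition V E G P"
    and nontrivial: "\<And>v. v \<in> V \<Longrightarrow> carrier (G v) \<noteq> {\<one>\<^bsub>G v\<^esub>}"
begin

definition VZ_gens :: "('v \<times> 'g) list set set" where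
  "VZ_gens = (\<Union>u \<in> {u. {u} \<in> P}. gp_incl V E G u ` virtual_centre (G u))
     \<union> {gp_incl V E G a x \<otimes>\<^bsub>GP\<^esub> gp_incl V E G b y | a b x y.
          {a, b} \<in> P \<and> a \<noteq> b \<and> \<not> E a b \<and> is_Z2 (G a) \<and> is_Z2 (G b)
          \<and> x \<in> carrier (G a) - {\<one>\<^bsub>G a\<^esub>} \<and> y \<in> carrier (G b) - {\<one>\<^bsub>G b\<^esub>}}"

lemma Union_blocks: "\<Union>P = V"
  using join by (simp add: join_decomposition_def)

lemma block_subset: "B \<in> P \<Longrightarrow> B \<subseteq> V"
  using Union_blocks by blast

lemma finite_blocks: "finite P"
proof -
  have "P \<subseteq> Pow V" using block_subset by blast
  then show ?thesis using finite_V finite_subset by blast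
qed

lemma blocks_disjoint_adj: "B \<in> P \<Longrightarrow> C \<in> P \<Longrightarrow> B \<noteq> C \<Longrightarrow> B \<inter> C = {} \<and> (\<forall>x\<in>B. \<forall>y\<in>C. E x y)"
  using join by (simp add: join_decomposition_def)

lemma block_adj_outside: "B \<in> P \<Longrightarrow> v \<in> B \<Longrightarrow> u \<in> V - B \<Longrightarrow> E v u"
  using Union_blocks blocks_disjoint_adj by blast

lemma block_cases:
  "B \<in> P \<Longrightarrow> card B = 1
     \<or> (\<exists>a b. B = {a, b} \<and> a \<noteq> b \<and> \<not> E a b \<and> is_Z2 (G a) \<and> is_Z2 (G b))
     \<or> (irreducible_sub E B \<and> card B \<ge> 2 \<and> \<not> (card B = 2 \<and> (\<forall>v\<in>B. is_Z2 (G v))))"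
  using join by (simp add: join_decomposition_def)

lemma gp_incl_cls: "gp_incl V E G u p = cls [(u, p)]"
  by (simp add: gp_incl_def)

lemma Z2_carrier:
  assumes "v \<in> V" "is_Z2 (G v)" "x \<in> carrier (G v)" "x \<noteq> \<one>\<^bsub>G v\<^esub>"
  shows "carrier (G v) = {\<one>\<^bsub>G v\<^esub>, x}"
  using is_Z2_iff[OF vertex_group[OF assms(1)]] assms(2-4) by auto

lemma VZ_gens_subset: "VZ_gens \<subseteq> virtual_centre GP"
proof
  fix z assume "z \<in> VZ_gens"
  then consider (single) u p where "{u} \<in> P" "p \<in> virtual_centre (G u)" "z = gp_incl V E G u p"
    | (pair) a b x y where "z = gp_incl V E G a x \<otimes>\<^bsub>GP\<^esub> gp_incl V E G b y"
        "{a, b} \<in> P" "a \<noteq> b" "\<not> E a b" "is_Z2 (G a)" "is_Z2 (G b)"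
        "x \<in> carrier (G a)" "x \<noteq> \<one>\<^bsub>G a\<^esub>" "y \<in> carrier (G b)" "y \<noteq> \<one>\<^bsub>G b\<^esub>"
    unfolding VZ_gens_def by blast
  then show "z \<in> virtual_centre GP"
  proof cases
    case single
    have "u \<in> V" "\<forall>v\<in>V - {u}. E u v" using single(1) block_subset block_adj_outside by auto
    then show ?thesis using cone_vertex_virtual_centre single(2,3) by (simp add: gp_incl_cls)
  next
    case pair
    have ab: "a \<in> V" "b \<in> V" using pair block_subset by auto
    then have "z = cls [(a, x), (b, y)]" using pair by (simp add: gp_incl_cls GP_mult)
    then show ?thesis
      using pair_virtual_centre[OF ab pair(3,4)] Z2_carrier pair block_adj_outside ab by auto
  qed
qed

context
  fixes w assumes w: "w \<in> W" and vz: "cls w \<in> virtual_centre GP"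
begin

lemma singleton_block_generate:
  assumes u: "{u} \<in> P"
  shows "cls (restrict_word {u} w) \<in> generate GP VZ_gens"
proof -
  have uV: "u \<in> V" using block_subset[OF u] by simp
  interpret proj: group_hom GP "G u" "vertex_proj u" by (rule group_hom_vertex_proj[OF uV])
  have "vertex_prod u w \<in> virtual_centre (G u)"
    using proj.virtual_centre_img[OF vertex_proj_surj[OF uV] vz] vertex_proj_cls[OF uV w] by simp
  then have "cls [(u, vertex_prod u w)] \<in> VZ_gens"
    using u unfolding VZ_gens_def gp_incl_cls by blast
  moreover have "eqw (restrict_word {u} w) [(u, vertex_prod u (restrict_word {u} w))]"
    using eqw_single_vertex[OF uV restrict_word_words[OF w]] verts_restrict_word[of "{u}" w] by blast
  then have "eqw (restrict_word {u} w) [(u, vertex_prod u w)]"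
    using vertex_prod_restrict_word[of u "{u}" w] by simp
  moreover have "cls (restrict_word {u} w) = cls [(u, vertex_prod u w)]"
    using cls_eq_iff[OF restrict_word_words[OF w]] calculation(2) by simp
  ultimately show ?thesis by (simp add: generate.incl)
qed

lemma pair_block_generate:
  assumes ab: "{a, b} \<in> P" "a \<noteq> b" "\<not> E a b" "is_Z2 (G a)" "is_Z2 (G b)"
  shows "cls (restrict_word {a, b} w) \<in> generate GP VZ_gens"
proof -
  have abV: "a \<in> V" "b \<in> V" using block_subset[OF ab(1)] by auto
  obtain x where x: "x \<in> carrier (G a)" "x \<noteq> \<one>\<^bsub>G a\<^esub>"
    using nontrivial[OF abV(1)] one_in_vertex_group[OF abV(1)] by blast
  obtain y where y: "y \<in> carrier (G b)" "y \<noteq> \<one>\<^bsub>G b\<^esub>"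
    using nontrivial[OF abV(2)] one_in_vertex_group[OF abV(2)] by blast
  have ca: "carrier (G a) = {\<one>\<^bsub>G a\<^esub>, x}" and cb: "carrier (G b) = {\<one>\<^bsub>G b\<^esub>, y}"
    using Z2_carrier abV ab(4,5) x y by auto
  obtain r where r: "reduced r" "eqw (restrict_word {a, b} w) r" "verts r \<subseteq> {a, b}"
    using exists_reduced_restrict_word[OF w] by blast
  have "commutes_with_powers r {a, b}"
    using commutes_with_powers_restrict virtual_centre_commutes_with_powers[OF w vz] r(2) by blast
  then have "even (length r)"
    using commutes_with_powers_even_length[OF ab(2,3) _ _ r(1,3)] x y abV by (simp add: nontriv_def)
  then have gen: "cls r \<in> generate GP {cls [(a, x), (b, y)], cls [(b, y), (a, x)]}"
    using reduced_even_length_generate[OF ab(2,3) ca cb r(1,3)] by blast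
  have "cls [(a, x), (b, y)] \<in> VZ_gens" "cls [(b, y), (a, x)] \<in> VZ_gens"
  proof -
    have "gp_incl V E G a x \<otimes>\<^bsub>GP\<^esub> gp_incl V E G b y = cls [(a, x), (b, y)]"
      "gp_incl V E G b y \<otimes>\<^bsub>GP\<^esub> gp_incl V E G a x = cls [(b, y), (a, x)]"
      using abV x y by (simp_all add: gp_incl_cls GP_mult)
    moreover have "{b, a} \<in> P" "\<not> E b a" using ab adj_sym by (auto simp: insert_commute)
    ultimately show "cls [(a, x), (b, y)] \<in> VZ_gens" "cls [(b, y), (a, x)] \<in> VZ_gens"
      unfolding VZ_gens_def using ab x y by (intro UnI2; blast)+
  qed
  then have "{cls [(a, x), (b, y)], cls [(b, y), (a, x)]} \<subseteq> VZ_gens" by blast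
  then have "cls r \<in> generate GP VZ_gens" using subsetD[OF GP.mono_generate gen] by blast
  moreover have "cls (restrict_word {a, b} w) = cls r"
    using cls_eq_iff[OF restrict_word_words[OF w]] r(2) by simp
  ultimately show ?thesis by simp
qed

lemma irreducible_block_generate:
  assumes B: "B \<in> P" "irreducible_sub E B" "card B \<ge> 2" "\<not> (card B = 2 \<and> (\<forall>v\<in>B. is_Z2 (G v)))"
  shows "cls (restrict_word B w) \<in> generate GP VZ_gens"
proof -
  obtain r where r: "reduced r" "eqw (restrict_word B w) r" "verts r \<subseteq> B"
    using exists_reduced_restrict_word[OF w] by blast
  have "commutes_with_powers r B"
    using commutes_with_powers_restrict virtual_centre_commutes_with_powers[OF w vz] r(2) by blast
  then have "r = []"
    using irreducible_block_Nil[OF block_subset[OF B(1)] B(2,3) _ r(1,3)] B(4) nontrivial block_subset[OF B(1)]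
    by blast
  then have "cls (restrict_word B w) = \<one>\<^bsub>GP\<^esub>"
    using cls_eq_iff[OF restrict_word_words[OF w]] r(2) GP_one by simp
  then show ?thesis using generate.one[of GP VZ_gens] by simp
qed

lemma block_generate:
  assumes B: "B \<in> P"
  shows "cls (restrict_word B w) \<in> generate GP VZ_gens"
  using block_cases[OF B]
proof (elim disjE)
  assume "card B = 1"
  then obtain u where "B = {u}" by (rule card_1_singletonE)
  then show ?thesis using singleton_block_generate B by simp
next
  assume "\<exists>a b. B = {a, b} \<and> a \<noteq> b \<and> \<not> E a b \<and> is_Z2 (G a) \<and> is_Z2 (G b)"
  then obtain a b where "B = {a, b}" "a \<noteq> b" "\<not> E a b" "is_Z2 (G a)" "is_Z2 (G b)" by blast
  then show ?thesis using pair_block_generate B by simp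
next
  assume "irreducible_sub E B \<and> card B \<ge> 2 \<and> \<not> (card B = 2 \<and> (\<forall>v\<in>B. is_Z2 (G v)))"
  then show ?thesis using irreducible_block_generate B by blast
qed

lemma virtual_centre_element_generate: "cls w \<in> generate GP VZ_gens"
proof -
  have "cls (restrict_word (\<Union>Q) w) \<in> generate GP VZ_gens" if "Q \<subseteq> P" for Q
    using finite_subset[OF that finite_blocks] that
  proof (induction Q rule: finite_induct)
    case empty
    show ?case using generate.one[of GP VZ_gens] by (simp add: GP_one restrict_word_def)
  next
    case (insert B Q)
    have BQ: "B \<in> P" "Q \<subseteq> P" "B \<notin> Q" using insert by auto
    have "B \<inter> C = {} \<and> (\<forall>x\<in>B. \<forall>y\<in>C. E x y)" if "C \<in> Q" for C
      using blocks_disjoint_adj[of B C] BQ that by auto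
    then have "B \<inter> \<Union>Q = {}" "\<forall>a\<in>B. \<forall>c\<in>\<Union>Q. E a c" by blast+
    from eqw_restrict_word_join[OF this w]
    have "cls (restrict_word (\<Union>(insert B Q)) w) = cls (restrict_word B w) \<otimes>\<^bsub>GP\<^esub> cls (restrict_word (\<Union>Q) w)"
      using cls_eq_iff restrict_word_words[OF w] GP_mult by simp
    then show ?case using generate.eng[OF block_generate[OF BQ(1)] insert.IH[OF BQ(2)]] by simp
  qed
  then have "cls (restrict_word (\<Union>P) w) \<in> generate GP VZ_gens" by blast
  moreover have "restrict_word (\<Union>P) w = w" using Union_blocks restrict_word_id words_verts[OF w] by simp
  ultimately show ?thesis by simp
qed

end

theorem virtual_centre_eq_generate: "virtual_centre GP = generate GP VZ_gens"
proof
  show "virtual_centre GP \<subseteq> generate GP VZ_gens"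
  proof
    fix x assume x: "x \<in> virtual_centre GP"
    then obtain w where "w \<in> W" "x = cls w" by (auto simp: virtual_centre_def GP_carrier)
    then show "x \<in> generate GP VZ_gens" using virtual_centre_element_generate x by blast
  qed
  show "generate GP VZ_gens \<subseteq> virtual_centre GP"
    by (rule GP.generate_subgroup_incl[OF VZ_gens_subset GP.subgroup_virtual_centre])
qed

end

theorem lemma2p14:
  fixes V :: "'v set" and E :: "'v \<Rightarrow> 'v \<Rightarrow> bool" and G :: "'v \<Rightarrow> 'g monoid"
    and P :: "'v set set"
  assumes "fin_graph V E"
    and "\<And>v. v \<in> V \<Longrightarrow> group (G v)"
    and "\<And>v. v \<in> V \<Longrightarrow> carrier (G v) \<noteq> {\<one>\<^bsub>G v\<^esub>}"
    and "join_decomposition V E G P"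
  shows "virtual_centre (graph_product V E G) =
    generate (graph_product V E G)
      ((\<Union>u \<in> {u. {u} \<in> P}. gp_incl V E G u ` virtual_centre (G u))
       \<union> {gp_incl V E G a x \<otimes>\<^bsub>graph_product V E G\<^esub> gp_incl V E G b y | a b x y.
            {a, b} \<in> P \<and> a \<noteq> b \<and> \<not> E a b \<and> is_Z2 (G a) \<and> is_Z2 (G b)
            \<and> x \<in> carrier (G a) - {\<one>\<^bsub>G a\<^esub>} \<and> y \<in> carrier (G b) - {\<one>\<^bsub>G b\<^esub>}})"
proof -
  interpret graph_prod_join V E G P
    by (intro graph_prod_join.intro graph_prod.intro graph_prod_join_axioms.intro) (use assms in auto)
  show ?thesis using virtual_centre_eq_generate unfolding VZ_gens_def .
qed

end
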